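(* Every closed directed family $\mathcal P\subset\nabla$ is cross modal.
   Context: $\nabla=\{(\lambda,\boldsymbol p):\lambda\ge0,\ 1\ge p_1\ge p_2\ge\dots\ge0,\ \sum_ip_i<\infty\}$, partially ordered componentwise. For $(\lambda,\boldsymbol p)\in\nabla$, $f(k;\lambda,\boldsymbol p)$ is the probability that $X+\sum_iB_i=k$ where $X\sim\mathrm{Poisson}(\lambda)$, $B_i\sim\mathrm{Bernoulli}(p_i)$ are independent, with $f(-1;\cdot)=0$. $\nabla$ carries the topology in which $(\lambda_j,\boldsymbol p_j)\to(\lambda,\boldsymbol p)$ iff $f(k;\lambda_j,\boldsymbol p_j)\to f(k;\lambda,\boldsymbol p)$ for all $k$; closed refers to this topology. The leading mode $m_+(\lambda,\boldsymbol p)$ is the unique integer $k$ with $f(k-1)\le f(k)>f(k+1)$; $m_-=m_+$ unless $f(m_+-1)=f(m_+)$, in which case $m_-=m_+-1$; the modes are the points where $f(\cdot;\lambda,\boldsymbol p)$ is maximal. A family $\mathcal P\subset\nabla$ is directed if $(0,\boldsymbol 0)\in\mathcal P$ and for every $k\ge0$: (a) for each $(\lambda,\boldsymbol p)\in\mathcal P$ with $m_+(\lambda,\boldsymbol p)=k$ there is $(\lambda',\boldsymbol p')\in\mathcal P$ with $(\lambda',\boldsymbol p')\ge(\lambda,\boldsymbol p)$, $m_+(\lambda',\boldsymbol p')=k+1$ and $f(k+1;\lambda',\boldsymbol p')>f(k+1;\lambda,\boldsymbol p)$; (b) for each $(\lambda,\boldsymbol p)\in\mathcal P$ with $m_-(\lambda,\boldsymbol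 p)=k+1$ there is $(\lambda',\boldsymbol p')\in\mathcal P$ with $(\lambda,\boldsymbol p)\ge(\lambda',\boldsymbol p')$, $m_-(\lambda',\boldsymbol p')=k$ and $f(k;\lambda,\boldsymbol p)<f(k;\lambda',\boldsymbol p')$. The family $\mathcal P$ is cross modal if for every $k\ge0$ the likelihood $(\lambda,\boldsymbol p)\mapsto f(k;\lambda,\boldsymbol p)$ attains its maximum over $\mathcal P$ and for every maximiser, $k$ is a mode of $f(\cdot;\lambda,\boldsymbol p)$. *)

theory Defs
  imports Complex_Main
begin

text \<open>A point of nabla is a pair (lambda, p) with p :: nat => real (index i of the
paper corresponds to p (i-1)).\<close>

type_synonym pbpar = "real \<times> (nat \<Rightarrow> real)"

definition nabla :: "pbpar set" where
  "nabla = {(l, p). l \<ge> 0 \<and> p 0 \<le> 1 \<and> (\<forall>i. p (Suc i) \<le> p i) \<and> (\<forall>i. 0 \<le> p i)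
                  \<and> summable p}"

definition pb_le :: "pbpar \<Rightarrow> pbpar \<Rightarrow> bool" where
  "pb_le q q' \<longleftrightarrow> fst q \<le> fst q' \<and> (\<forall>i. snd q i \<le> snd q' i)"

text \<open>Distribution of X + B_0 + ... + B_(n-1), X ~ Poisson(l), B_i ~ Bernoulli(p i)
independent; value 0 at negative integers.\<close>
fun pb_partial :: "real \<Rightarrow> (nat \<Rightarrow> real) \<Rightarrow> nat \<Rightarrow> int \<Rightarrow> real" where
  "pb_partial l p 0 k = (if k < 0 then 0 else exp (- l) * l ^ nat k / fact (nat k))"
| "pb_partial l p (Suc n) k = (1 - p n) * pb_partial l p n k + p n * pb_partial l p n (k - 1)"

text \<open>f(k; lambda, p) = P(X + sum_i B_i = k); the infinite sum converges a.s., so this is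
the limit of the finite partial distributions.\<close>
definition pbf :: "int \<Rightarrow> pbpar \<Rightarrow> real" where
  "pbf k q = lim (\<lambda>n. pb_partial (fst q) (snd q) n k)"

definition m_plus :: "pbpar \<Rightarrow> nat" where
  "m_plus q = (THE k::nat. pbf (int k - 1) q \<le> pbf (int k) q \<and> pbf (int k) q > pbf (int k + 1) q)"

definition m_minus :: "pbpar \<Rightarrow> nat" where
  "m_minus q = (if pbf (int (m_plus q) - 1) q = pbf (int (m_plus q)) q then m_plus q - 1 else m_plus q)"

definition is_mode :: "nat \<Rightarrow> pbpar \<Rightarrow> bool" where
  "is_mode k q \<longleftrightarrow> (\<forall>j. pbf j q \<le> pbf (int k) q)"

text \<open>Closedness in nabla for the (metrizable) topology of pointwise convergence of f.\<close>
definition nabla_closed :: "pbpar set \<Rightarrow> bool" where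
  "nabla_closed P \<longleftrightarrow> (\<forall>s q. (\<forall>j. s j \<in> P) \<longrightarrow> q \<in> nabla \<longrightarrow>
       (\<forall>k. (\<lambda>j. pbf k (s j)) \<longlonglongrightarrow> pbf k q) \<longrightarrow> q \<in> P)"

definition directed :: "pbpar set \<Rightarrow> bool" where
  "directed P \<longleftrightarrow> (0, \<lambda>_. 0) \<in> P \<and>
    (\<forall>k::nat.
      (\<forall>q\<in>P. m_plus q = k \<longrightarrow>
         (\<exists>q'\<in>P. pb_le q q' \<and> m_plus q' = k + 1 \<and> pbf (int k + 1) q' > pbf (int k + 1) q)) \<and>
      (\<forall>q\<in>P. m_minus q = k + 1 \<longrightarrow>
         (\<exists>q'\<in>P. pb_le q' q \<and> m_minus q' = k \<and> pbf (int k) q < pbf (int k) q')))"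

definition cross_modal :: "pbpar set \<Rightarrow> bool" where
  "cross_modal P \<longleftrightarrow> (\<forall>k::nat.
      (\<exists>q\<in>P. \<forall>q'\<in>P. pbf (int k) q' \<le> pbf (int k) q) \<and>
      (\<forall>q\<in>P. (\<forall>q'\<in>P. pbf (int k) q' \<le> pbf (int k) q) \<longrightarrow> is_mode k q))"

end

theory Submission
  imports Defs "HOL-Library.Diagonal_Subsequence"
begin

text \<open>
  Each f(.; lambda, p) is ultra log-concave, hence unimodal, and f(k; .) is monotone in the
  parameters away from the modes: if q <= q', then f(k; q) <= f(k; q') for k above the leading
  mode of q', and f(k; q') <= f(k; q) for k below the lower mode of q. For one Bernoulli factor
  this is a direct computation; several factors are raised one at a time, and the Poisson part
  is approximated (Le Cam) by many small Bernoulli factors.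

  If q maximises f(k) over P but k > m_+(q), the upward steps of the directed family produce a
  chain q <= q_1 <= ... in P whose leading modes climb to k; by monotonicity f(k) does not
  decrease along it and strictly increases at the last step, contradicting maximality;
  symmetrically if k < m_-(q). A maximiser exists: by a Chernoff bound, f(k; lambda, p) >= c
  bounds lambda + sum p, so a maximising sequence has a coordinatewise convergent subsequence,
  f converges pointwise along it (the small tail of p is moved into the Poisson part), and the
  limit stays in P because P is closed.
\<close>

section \<open>Convolution with Bernoulli distributions\<close>

definition bconv :: "real \<Rightarrow> (int \<Rightarrow> real) \<Rightarrow> int \<Rightarrow> real" where
  "bconv t g = (\<lambda>k. (1 - t) * g k + t * g (k - 1))"

primrec bconvs :: "(int \<Rightarrow> real) \<Rightarrow> (nat \<Rightarrow> real) \<Rightarrow> nat \<Rightarrow> int \<Rightarrow> real" where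
  "bconvs g p 0 = g"
| "bconvs g p (Suc n) = bconv (p n) (bconvs g p n)"

lemma bconv_commute: "bconv s (bconv t g) = bconv t (bconv s g)"
  by (auto simp: bconv_def fun_eq_iff algebra_simps)

lemma bconv_bconvs: "bconv t (bconvs g p n) = bconvs (bconv t g) p n"
  by (induction n) (simp_all, subst bconv_commute, simp)

lemma bconvs_commute: "bconvs (bconvs g a n) b m = bconvs (bconvs g b m) a n"
proof (induction m)
  case 0 then show ?case by simp
next
  case (Suc m) then show ?case by (simp add: bconv_bconvs)
qed

lemma bconvs_add: "bconvs g p (n + m) = bconvs (bconvs g p n) (\<lambda>i. p (n + i)) m"
  by (induction m) auto

lemma bconvs_cong: "(\<And>i. i < n \<Longrightarrow> p i = p' i) \<Longrightarrow> bconvs g p n = bconvs g p' n"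
  by (induction n) auto

lemma bconv_0[simp]: "bconv 0 g = g"
  by (simp add: bconv_def)

lemma bconvs_zero_tail:
  "(\<And>i. n \<le> i \<Longrightarrow> i < m \<Longrightarrow> p i = 0) \<Longrightarrow> n \<le> m \<Longrightarrow> bconvs g p m = bconvs g p n"
  by (induction m) (auto simp: le_Suc_eq)

lemma bconv_diff: "bconv t (\<lambda>k. g k - h k) = (\<lambda>k. bconv t g k - bconv t h k)"
  by (auto simp: bconv_def fun_eq_iff algebra_simps)

lemma bconvs_diff: "bconvs (\<lambda>k. g k - h k) p n = (\<lambda>k. bconvs g p n k - bconvs h p n k)"
  by (induction n) (auto simp: bconv_diff)

lemma bconvs_extract: "s < n \<Longrightarrow> bconvs g c n = bconv (c s) (bconvs g (c(s := 0)) n)"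
proof (induction n)
  case 0 then show ?case by simp
next
  case (Suc n)
  show ?case
  proof (cases "s = n")
    case True
    have "bconvs g (c(s := 0)) n = bconvs g c n" by (rule bconvs_cong) (use True in auto)
    then show ?thesis using True by (simp only: bconvs.simps fun_upd_same bconv_0)
  next
    case False
    then have "s < n" using Suc by auto
    then show ?thesis using Suc False by (simp add: bconv_commute)
  qed
qed

definition supp_nat :: "(int \<Rightarrow> real) \<Rightarrow> bool" where
  "supp_nat g \<longleftrightarrow> (\<forall>k<0. g k = 0)"

lemma supp_nat_bconv: "supp_nat g \<Longrightarrow> supp_nat (bconv t g)"
  by (auto simp: supp_nat_def bconv_def)

lemma supp_nat_bconvs: "supp_nat g \<Longrightarrow> supp_nat (bconvs g p n)"
  by (induction n) (auto simp: supp_nat_bconv)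

definition unit_valued :: "(nat \<Rightarrow> real) \<Rightarrow> bool" where
  "unit_valued p \<longleftrightarrow> (\<forall>i. 0 \<le> p i \<and> p i \<le> 1)"

definition l1_upto :: "(int \<Rightarrow> real) \<Rightarrow> nat \<Rightarrow> real" where
  "l1_upto d K = (\<Sum>j\<le>K. \<bar>d (int j)\<bar>)"

lemma l1_upto_shift_eq: "supp_nat d \<Longrightarrow> (\<Sum>j\<le>K. \<bar>d (int j - 1)\<bar>) = (\<Sum>j<K. \<bar>d (int j)\<bar>)"
proof (induction K)
  case 0 then show ?case by (auto simp: supp_nat_def)
next
  case (Suc K)
  then show ?case by (simp add: of_nat_Suc)
qed

lemma l1_upto_shift_le: "supp_nat d \<Longrightarrow> (\<Sum>j\<le>K. \<bar>d (int j - 1)\<bar>) \<le> l1_upto d K"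
  unfolding l1_upto_def l1_upto_shift_eq by (rule sum_mono2) auto

lemma l1_upto_bconv_le:
  assumes "supp_nat d" "0 \<le> t" "t \<le> 1"
  shows "l1_upto (bconv t d) K \<le> l1_upto d K"
proof -
  have "l1_upto (bconv t d) K \<le> (\<Sum>j\<le>K. (1 - t) * \<bar>d (int j)\<bar> + t * \<bar>d (int j - 1)\<bar>)"
    unfolding l1_upto_def bconv_def
  proof (rule sum_mono)
    fix j assume "j \<in> {..K}"
    have "\<bar>(1 - t) * d (int j) + t * d (int j - 1)\<bar> \<le> \<bar>(1 - t) * d (int j)\<bar> + \<bar>t * d (int j - 1)\<bar>"
      by (rule abs_triangle_ineq)
    also have "\<dots> = (1 - t) * \<bar>d (int j)\<bar> + t * \<bar>d (int j - 1)\<bar>"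
      using assms by (simp add: abs_mult)
    finally show "\<bar>(1 - t) * d (int j) + t * d (int j - 1)\<bar> \<le> (1 - t) * \<bar>d (int j)\<bar> + t * \<bar>d (int j - 1)\<bar>" .
  qed
  also have "\<dots> = (1 - t) * l1_upto d K + t * (\<Sum>j\<le>K. \<bar>d (int j - 1)\<bar>)"
    by (simp add: l1_upto_def sum.distrib sum_distrib_left)
  also have "\<dots> \<le> (1 - t) * l1_upto d K + t * l1_upto d K"
    using l1_upto_shift_le[OF assms(1), of K] assms by (intro add_mono mult_left_mono) auto
  finally show ?thesis by (simp add: algebra_simps)
qed

lemma l1_upto_bconvs_le:
  assumes "supp_nat d" "unit_valued p"
  shows "l1_upto (bconvs d p n) K \<le> l1_upto d K"
proof (induction n)
  case 0 then show ?case by simp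
next
  case (Suc n)
  have "l1_upto (bconvs d p (Suc n)) K \<le> l1_upto (bconvs d p n) K"
    using assms by (auto simp: unit_valued_def intro!: l1_upto_bconv_le supp_nat_bconvs)
  then show ?case using Suc by linarith
qed

lemma abs_le_l1_upto: "j \<le> K \<Longrightarrow> \<bar>d (int j)\<bar> \<le> l1_upto d K"
  unfolding l1_upto_def by (rule member_le_sum) auto

lemma l1_upto_add_le: "l1_upto (\<lambda>k. f k + g k) K \<le> l1_upto f K + l1_upto g K"
  unfolding l1_upto_def by (simp add: sum.distrib[symmetric] sum_mono abs_triangle_ineq)

lemma l1_upto_bconv_sub_le:
  assumes "supp_nat g" "0 \<le> t"
  shows "l1_upto (\<lambda>k. bconv t g k - g k) K \<le> 2 * t * l1_upto g K"
proof -
  have "l1_upto (\<lambda>k. bconv t g k - g k) K = (\<Sum>j\<le>K. t * \<bar>g (int j - 1) - g (int j)\<bar>)"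
    unfolding l1_upto_def bconv_def
  proof (intro sum.cong refl)
    fix x
    have "(1 - t) * g (int x) + t * g (int x - 1) - g (int x) = t * (g (int x - 1) - g (int x))"
      by (simp add: algebra_simps)
    then show "\<bar>(1 - t) * g (int x) + t * g (int x - 1) - g (int x)\<bar> = t * \<bar>g (int x - 1) - g (int x)\<bar>"
      using assms by (simp add: abs_mult)
  qed
  also have "\<dots> \<le> (\<Sum>j\<le>K. t * \<bar>g (int j - 1)\<bar> + t * \<bar>g (int j)\<bar>)"
    using assms
      by (intro sum_mono) (auto simp flip: distrib_left intro!: mult_left_mono abs_triangle_ineq4)
  also have "\<dots> = t * (\<Sum>j\<le>K. \<bar>g (int j - 1)\<bar>) + t * l1_upto g K"
    by (simp add: l1_upto_def sum.distrib sum_distrib_left)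
  also have "\<dots> \<le> t * l1_upto g K + t * l1_upto g K"
    using l1_upto_shift_le[OF assms(1), of K] assms by (intro add_mono mult_left_mono) auto
  finally show ?thesis by simp
qed

definition poisson :: "real \<Rightarrow> int \<Rightarrow> real" where
  "poisson l k = (if k < 0 then 0 else exp (- l) * l ^ nat k / fact (nat k))"

lemma poisson_nonneg: "0 \<le> l \<Longrightarrow> 0 \<le> poisson l k"
  by (auto simp: poisson_def)

lemma poisson_of_nat: "poisson l (int j) = exp (- l) * l ^ j / fact j"
  by (simp add: poisson_def)

lemma supp_nat_poisson: "supp_nat (poisson l)"
  by (auto simp: supp_nat_def poisson_def)

lemma poisson_recurrence: "(of_int k + 1) * poisson l (k + 1) = l * poisson l k"
proof (cases "k < 0")
  case False
  then obtain j where j: "k = int j" by (metis nonneg_int_cases not_less)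
  have "fact (Suc j) = real (Suc j) * fact j" by simp
  then have "real (Suc j) * poisson l (int (Suc j)) = l * poisson l (int j)"
    by (simp add: poisson_of_nat field_simps del: of_nat_Suc)
  then show ?thesis using j by (simp add: add.commute)
qed (auto simp: poisson_def)

lemma exp_partial_sum_le:
  assumes "0 \<le> (x::real)"
  shows "(\<Sum>j\<le>K. x ^ j / fact j) \<le> exp x"
proof -
  have s: "(\<lambda>n. x ^ n / fact n) sums exp x"
    using exp_converges[of x] by (simp add: divide_inverse mult.commute scaleR_conv_of_real)
  have "(\<Sum>j\<le>K. x ^ j / fact j) \<le> suminf (\<lambda>n. x ^ n / fact n)"
    by (rule sum_le_suminf) (use s assms in \<open>auto simp: sums_iff\<close>)
  then show ?thesis using s by (simp add: sums_iff)
qed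

lemma exp_term_le:
  assumes "0 \<le> (x::real)"
  shows "x ^ j / fact j \<le> exp x"
proof -
  have "x ^ j / fact j \<le> (\<Sum>i\<le>j. x ^ i / fact i)"
    by (rule member_le_sum) (use assms in auto)
  then show ?thesis using exp_partial_sum_le[OF assms, of j] by linarith
qed

lemma l1_upto_poisson_le:
  assumes "0 \<le> l"
  shows "l1_upto (poisson l) K \<le> 1"
proof -
  have "l1_upto (poisson l) K = exp (- l) * (\<Sum>j\<le>K. l ^ j / fact j)"
    unfolding l1_upto_def poisson_of_nat using assms by (simp add: sum_distrib_left abs_mult)
  also have "\<dots> \<le> exp (- l) * exp l"
    by (intro mult_left_mono exp_partial_sum_le assms) auto
  also have "\<dots> = 1" by (simp add: exp_minus)
  finally show ?thesis .
qed

lemma poisson_tendsto_0: "(\<lambda>n. poisson l (int n)) \<longlonglongrightarrow> 0"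
proof -
  have "(\<lambda>n. l ^ n / fact n) \<longlonglongrightarrow> 0"
    using summable_LIMSEQ_zero[OF summable_exp_generic[of l]]
      by (simp add: divide_inverse mult.commute)
  from tendsto_mult_right_zero[OF this, of "exp (- l)"] show ?thesis
    by (simp add: poisson_of_nat mult.assoc)
qed

lemma poisson_pgf_term_le:
  assumes "0 \<le> l" "0 \<le> z" "z \<le> 1"
  shows "z ^ j * poisson l (int j) \<le> exp (- ((1 - z) * l))"
proof -
  have "z ^ j * poisson l (int j) = exp (- l) * ((z * l) ^ j / fact j)"
    by (simp add: poisson_of_nat power_mult_distrib)
  also have "\<dots> \<le> exp (- l) * exp (z * l)"
    by (intro mult_left_mono exp_term_le) (use assms in auto)
  also have "\<dots> = exp (- ((1 - z) * l))"
    by (simp add: exp_add[symmetric] algebra_simps)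
  finally show ?thesis .
qed

lemma poisson_add:
  assumes "0 \<le> a" "0 \<le> t"
  shows "poisson (a + t) (int k) = (\<Sum>i\<le>k. poisson a (int (k - i)) * poisson t (int i))"
proof -
  have "(a + t) ^ k = (\<Sum>i\<le>k. of_nat (k choose i) * t ^ i * a ^ (k - i))"
    using binomial_ring[of t a k] by (simp add: add.commute)
  then have "poisson (a + t) (int k) = exp (- a) * exp (- t) * (\<Sum>i\<le>k. of_nat (k choose i) * t ^ i * a ^ (k - i)) / fact k"
    by (simp add: poisson_of_nat exp_add[symmetric])
  also have "\<dots> = (\<Sum>i\<le>k. exp (- a) * exp (- t) * (of_nat (k choose i) * t ^ i * a ^ (k - i)) / fact k)"
    by (simp add: sum_distrib_left sum_divide_distrib)
  also have "\<dots> = (\<Sum>i\<le>k. poisson a (int (k - i)) * poisson t (int i))"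
  proof (intro sum.cong refl)
    fix i assume "i \<in> {..k}"
    then have ik: "i \<le> k" by simp
    have "real (k choose i) = fact k / (fact i * fact (k - i))"
      using binomial_fact[OF ik] by simp
    then show "exp (- a) * exp (- t) * (of_nat (k choose i) * t ^ i * a ^ (k - i)) / fact k =
          poisson a (int (k - i)) * poisson t (int i)"
      by (simp add: poisson_of_nat field_simps)
  qed
  finally show ?thesis .
qed

lemma tendsto_poisson: "(f \<longlongrightarrow> l) F \<Longrightarrow> ((\<lambda>x. poisson (f x) k) \<longlongrightarrow> poisson l k) F"
  unfolding poisson_def by (cases "k < 0") (auto intro!: tendsto_intros)

definition bernoulli_mass :: "real \<Rightarrow> nat \<Rightarrow> real" where
  "bernoulli_mass t i = (if i = 0 then 1 - t else if i = 1 then t else 0)"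

lemma bconv_eq_convolution:
  assumes "supp_nat g"
  shows "bconv t g (int k) = (\<Sum>i\<le>k. g (int (k - i)) * bernoulli_mass t i)"
proof -
  have "(\<Sum>i\<le>k. g (int (k - i)) * bernoulli_mass t i) = (\<Sum>i\<in>{..k} \<inter> {0,1}. g (int (k - i)) * bernoulli_mass t i)"
    by (rule sum.mono_neutral_right) (auto simp: bernoulli_mass_def)
  also have "\<dots> = bconv t g (int k)"
  proof (cases k)
    case 0 then show ?thesis using assms by (simp add: bconv_def bernoulli_mass_def supp_nat_def)
  next
    case (Suc m)
    then have "{..k} \<inter> {0,1} = {0,1}" by auto
    then show ?thesis using Suc by (simp add: bconv_def bernoulli_mass_def algebra_simps)
  qed
  finally show ?thesis by simp
qed

lemma one_minus_le_exp_minus: "1 - (t::real) \<le> exp (- t)"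
  using exp_ge_add_one_self[of "-t"] by simp

lemma poisson_bernoulli_distance:
  assumes "0 \<le> t"
  shows "(\<Sum>i\<le>K. \<bar>poisson t (int i) - bernoulli_mass t i\<bar>) \<le> 2 * t ^ 2"
proof -
  define e where "e i = \<bar>poisson t (int i) - bernoulli_mass t i\<bar>" for i
  have e_nonneg: "0 \<le> e i" for i by (simp add: e_def)
  have "(\<Sum>i\<le>K. e i) \<le> (\<Sum>i\<le>Suc K. e i)"
    by (rule sum_mono2) (auto simp: e_nonneg)
  also have "\<dots> = (\<Sum>i\<le>Suc K. e i - poisson t (int i)) + (\<Sum>i\<le>Suc K. poisson t (int i))"
    by (simp add: sum.distrib[symmetric])
  also have "(\<Sum>i\<le>Suc K. e i - poisson t (int i)) = (\<Sum>i\<in>{0,1}. e i - poisson t (int i))"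
    by (rule sum.mono_neutral_right) (use poisson_nonneg[OF assms] in \<open>auto simp: e_def bernoulli_mass_def\<close>)
  also have "\<dots> = (e 0 - poisson t 0) + (e 1 - poisson t 1)" by simp
  also have "e 0 = exp (- t) - (1 - t)"
    using one_minus_le_exp_minus[of t] by (simp add: e_def bernoulli_mass_def poisson_def)
  also have "e 1 = t - t * exp (- t)"
  proof -
    have "t * exp (- t) \<le> t" using assms by (simp add: mult_left_le)
    then show ?thesis by (simp add: e_def bernoulli_mass_def poisson_def mult.commute)
  qed
  also have "(\<Sum>i\<le>Suc K. poisson t (int i)) \<le> 1"
    using l1_upto_poisson_le[OF assms, of "Suc K"] poisson_nonneg[OF assms]
      by (simp add: l1_upto_def)
  finally have "(\<Sum>i\<le>K. e i) \<le> 2 * t * (1 - exp (- t))"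
    by (simp add: poisson_def algebra_simps)
  also have "\<dots> \<le> 2 * t * t"
    using one_minus_le_exp_minus[of t] assms by (intro mult_left_mono) auto
  finally show ?thesis by (simp add: e_def power2_eq_square)
qed

lemma le_cam_step:
  assumes "0 \<le> a" "0 \<le> t"
  shows "l1_upto (\<lambda>k. bconv t (poisson a) k - poisson (a + t) k) K \<le> 2 * t ^ 2"
proof -
  define e where "e i = poisson t (int i) - bernoulli_mass t i" for i
  have D: "bconv t (poisson a) (int k) - poisson (a + t) (int k) = - (\<Sum>i\<le>k. poisson a (int (k - i)) * e i)" for k
    unfolding bconv_eq_convolution[OF supp_nat_poisson] poisson_add[OF assms] e_def
    by (simp add: sum_subtractf[symmetric] sum_negf[symmetric] algebra_simps)
  have "l1_upto (\<lambda>k. bconv t (poisson a) k - poisson (a + t) k) K \<le> (\<Sum>k\<le>K. \<Sum>i\<le>k. \<bar>e i\<bar> * poisson a (int (k - i)))"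
    unfolding l1_upto_def D
  proof (rule sum_mono)
    fix k
    have "\<bar>- (\<Sum>i\<le>k. poisson a (int (k - i)) * e i)\<bar> \<le> (\<Sum>i\<le>k. \<bar>poisson a (int (k - i)) * e i\<bar>)"
      by (simp only: abs_minus_cancel sum_abs)
    also have "\<dots> = (\<Sum>i\<le>k. \<bar>e i\<bar> * poisson a (int (k - i)))"
      using poisson_nonneg[OF assms(1)] by (simp add: abs_mult mult.commute)
    finally show "\<bar>- (\<Sum>i\<le>k. poisson a (int (k - i)) * e i)\<bar> \<le> (\<Sum>i\<le>k. \<bar>e i\<bar> * poisson a (int (k - i)))" .
  qed
  also have "\<dots> = (\<Sum>(i, j)\<in>{(i, j). i + j \<le> K}. \<bar>e i\<bar> * poisson a (int j))"
    by (rule sum.triangle_reindex_eq[symmetric])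
  also have "\<dots> \<le> (\<Sum>(i, j)\<in>{..K} \<times> {..K}. \<bar>e i\<bar> * poisson a (int j))"
    by (rule sum_mono2) (use poisson_nonneg[OF assms(1)] in auto)
  also have "\<dots> = (\<Sum>i\<le>K. \<bar>e i\<bar>) * (\<Sum>j\<le>K. poisson a (int j))"
    by (simp add: sum.cartesian_product[symmetric] sum_product)
  also have "\<dots> \<le> (\<Sum>i\<le>K. \<bar>e i\<bar>) * 1"
    using l1_upto_poisson_le[OF assms(1), of K] poisson_nonneg[OF assms(1)]
    by (intro mult_left_mono) (auto simp: l1_upto_def intro: sum_nonneg)
  also have "\<dots> \<le> 2 * t ^ 2"
    using poisson_bernoulli_distance[OF assms(2), of K] by (simp add: e_def)
  finally show ?thesis .
qed

lemma le_cam: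
  assumes "0 \<le> a" "unit_valued p"
  shows "l1_upto (\<lambda>k. bconvs (poisson a) p n k - poisson (a + (\<Sum>i<n. p i)) k) K \<le> 2 * (\<Sum>i<n. (p i) ^ 2)"
proof (induction n)
  case 0 then show ?case by (simp add: l1_upto_def)
next
  case (Suc n)
  define s where "s = a + (\<Sum>i<n. p i)"
  have s0: "0 \<le> s" using assms unfolding s_def unit_valued_def
    by (intro add_nonneg_nonneg sum_nonneg) auto
  have p0: "0 \<le> p n" "p n \<le> 1" using assms by (auto simp: unit_valued_def)
  have eq: "(\<lambda>k. bconvs (poisson a) p (Suc n) k - poisson (a + (\<Sum>i<Suc n. p i)) k) =
     (\<lambda>k. bconv (p n) (\<lambda>k. bconvs (poisson a) p n k - poisson s k) k + (bconv (p n) (poisson s) k - poisson (s + p n) k))"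
    by (simp add: bconv_diff s_def algebra_simps)
  have "l1_upto (\<lambda>k. bconvs (poisson a) p (Suc n) k - poisson (a + (\<Sum>i<Suc n. p i)) k) K \<le>
     l1_upto (bconv (p n) (\<lambda>k. bconvs (poisson a) p n k - poisson s k)) K + l1_upto (\<lambda>k. bconv (p n) (poisson s) k - poisson (s + p n) k) K"
    unfolding eq by (rule l1_upto_add_le)
  also have "\<dots> \<le> l1_upto (\<lambda>k. bconvs (poisson a) p n k - poisson s k) K + 2 * (p n) ^ 2"
  proof (intro add_mono l1_upto_bconv_le le_cam_step)
    show "supp_nat (\<lambda>k. bconvs (poisson a) p n k - poisson s k)"
      using supp_nat_bconvs[OF supp_nat_poisson, of a p n] supp_nat_poisson[of s]
        by (simp add: supp_nat_def)
  qed (use p0 s0 in auto)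
  also have "\<dots> \<le> 2 * (\<Sum>i<Suc n. (p i) ^ 2)"
    using Suc by (simp add: s_def)
  finally show ?case .
qed

lemma bconvs_le_cam:
  assumes l0: "0 \<le> l" and a: "unit_valued a" and p: "unit_valued p"
  shows "\<bar>bconvs (bconvs (poisson l) a m) p n (int j) - bconvs (poisson (l + (\<Sum>i<m. a i))) p n (int j)\<bar>
    \<le> 2 * (\<Sum>i<m. (a i)\<^sup>2)"
proof -
  define d where "d = (\<lambda>k. bconvs (poisson l) a m k - poisson (l + (\<Sum>i<m. a i)) k)"
  have "\<bar>bconvs (bconvs (poisson l) a m) p n (int j) - bconvs (poisson (l + (\<Sum>i<m. a i))) p n (int j)\<bar>
      \<le> l1_upto (bconvs d p n) j"
    using abs_le_l1_upto[of j j "bconvs d p n"] by (simp add: d_def bconvs_diff)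
  also have "\<dots> \<le> l1_upto d j"
    using supp_nat_bconvs[OF supp_nat_poisson, of l a m] supp_nat_poisson
    by (intro l1_upto_bconvs_le[OF _ p]) (simp add: d_def supp_nat_def)
  also have "\<dots> \<le> 2 * (\<Sum>i<m. (a i)\<^sup>2)" unfolding d_def by (rule le_cam[OF l0 a])
  finally show ?thesis .
qed

section \<open>Ultra log-concave sequences and their modes\<close>

text \<open>(k + 1) g (k + 1) / g k is non-increasing in k, written without division.\<close>
definition ulc :: "(int \<Rightarrow> real) \<Rightarrow> bool" where
  "ulc g \<longleftrightarrow> (\<forall>A B. -1 \<le> A \<longrightarrow> A \<le> B \<longrightarrow>
      of_int (B + 1) * g A * g (B + 1) \<le> of_int (A + 1) * g (A + 1) * g B)"

lemma ulcD: "ulc g \<Longrightarrow> -1 \<le> A \<Longrightarrow> A \<le> B \<Longrightarrow>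
    of_int (B + 1) * g A * g (B + 1) \<le> of_int (A + 1) * g (A + 1) * g B"
  unfolding ulc_def by blast

lemma ulc_poisson: "ulc (poisson l)"
  unfolding ulc_def
proof (intro allI impI)
  fix A B :: int
  have "of_int (B + 1) * poisson l A * poisson l (B + 1) = poisson l A * ((of_int B + 1) * poisson l (B + 1))"
    by simp
  also have "\<dots> = poisson l A * l * poisson l B" by (simp only: poisson_recurrence mult.assoc)
  also have "\<dots> = of_int (A + 1) * poisson l (A + 1) * poisson l B"
    using poisson_recurrence[of A l] by simp
  finally show "-1 \<le> A \<Longrightarrow> A \<le> B \<Longrightarrow>
      of_int (B + 1) * poisson l A * poisson l (B + 1) \<le> of_int (A + 1) * poisson l (A + 1) * poisson l B"
    by simp
qed

definition ulc_seq :: "(int \<Rightarrow> real) \<Rightarrow> bool" where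
  "ulc_seq g \<longleftrightarrow> (\<forall>k. 0 \<le> g k) \<and> supp_nat g \<and> (\<lambda>n. g (int n)) \<longlonglongrightarrow> 0 \<and> (\<exists>k. g k \<noteq> 0) \<and> ulc g"

lemma ulc_seqD:
  assumes "ulc_seq g"
  shows "\<And>k. 0 \<le> g k" "\<And>k. k < 0 \<Longrightarrow> g k = 0" "(\<lambda>n. g (int n)) \<longlonglongrightarrow> 0" "\<exists>k. g k \<noteq> 0" "ulc g"
  using assms by (auto simp: ulc_seq_def supp_nat_def)

lemma ulc_seq_poisson:
  assumes "0 \<le> l"
  shows "ulc_seq (poisson l)"
  unfolding ulc_seq_def
  using poisson_nonneg[OF assms] supp_nat_poisson poisson_tendsto_0 ulc_poisson
  by (auto intro: exI[of _ 0] simp: poisson_def)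

lemma ulc_seq_log_concave:
  assumes "ulc_seq g" "i \<le> j"
  shows "g i * g (j + 1) \<le> g (i + 1) * g j"
proof (cases "i < 0")
  case True
  then show ?thesis using ulc_seqD[OF assms(1)] by simp
next
  case False
  let ?L = "g i * g (j + 1)" and ?R = "g (i + 1) * g j"
  have "of_int (j + 1) * g i * g (j + 1) \<le> of_int (i + 1) * g (i + 1) * g j"
    using ulc_seqD(5)[OF assms(1)] False assms(2) unfolding ulc_def by auto
  then have h: "of_int (j + 1) * ?L \<le> of_int (i + 1) * ?R" by (simp add: mult.assoc)
  have L0: "0 \<le> ?L" using ulc_seqD(1)[OF assms(1)] by simp
  have "of_int (i + 1) * ?L \<le> of_int (j + 1) * ?L"
    using assms(2) L0 by (intro mult_right_mono) auto
  then have "of_int (i + 1) * ?L \<le> of_int (i + 1) * ?R" using h by linarith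
  then show ?thesis using False by (simp add: mult_le_cancel_left)
qed

definition is_lead_mode :: "(int \<Rightarrow> real) \<Rightarrow> nat \<Rightarrow> bool" where
  "is_lead_mode g L \<longleftrightarrow> (\<forall>j. g j \<le> g (int L)) \<and> (\<forall>j. int L < j \<longrightarrow> g j < g (int L))"

lemma is_lead_mode_unique:
  assumes "is_lead_mode g L" "is_lead_mode g L'"
  shows "L = L'"
proof (rule ccontr)
  assume "L \<noteq> L'"
  then consider "L < L'" | "L' < L" by linarith
  then show False
  proof cases
    case 1
    then have "g (int L') < g (int L)" using assms(1) unfolding is_lead_mode_def by auto
    moreover have "g (int L) \<le> g (int L')" using assms(2) unfolding is_lead_mode_def by auto
    ultimately show False by simp
  next
    case 2
    then have "g (int L) < g (int L')" using assms(2) unfolding is_lead_mode_def by auto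
    moreover have "g (int L') \<le> g (int L)" using assms(1) unfolding is_lead_mode_def by auto
    ultimately show False by simp
  qed
qed

lemma ulc_seq_pos:
  assumes "ulc_seq g"
  obtains k0 :: nat where "0 < g (int k0)"
proof -
  obtain k where k: "g k \<noteq> 0" using ulc_seqD(4)[OF assms] by blast
  then have "0 \<le> k" using ulc_seqD(2)[OF assms, of k] by force
  moreover have "0 < g k" using k ulc_seqD(1)[OF assms, of k] by simp
  ultimately show ?thesis using that[of "nat k"] by simp
qed

lemma ulc_seq_max_attained:
  assumes g: "ulc_seq g"
  obtains m N where "\<And>j. g j \<le> g (int m)" and "\<And>L. \<forall>j. g j \<le> g (int L) \<Longrightarrow> L \<le> N"
proof -
  obtain k0 :: nat where k0: "0 < g (int k0)" using ulc_seq_pos[OF g] by blast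
  obtain N where N: "\<And>n. N \<le> n \<Longrightarrow> g (int n) < g (int k0)"
    using order_tendstoD(2)[OF ulc_seqD(3)[OF g] k0] by (auto simp: eventually_sequentially)
  have "k0 < N" using N[of k0] by (metis less_irrefl not_le)
  have "Max ((\<lambda>j. g (int j)) ` {..N}) \<in> (\<lambda>j. g (int j)) ` {..N}"
    by (rule Max_in) auto
  then obtain m where m: "Max ((\<lambda>j. g (int j)) ` {..N}) = g (int m)" by (rule imageE)
  have m_max: "g (int j) \<le> g (int m)" if "j \<le> N" for j
    unfolding m[symmetric] using that by (intro Max_ge) auto
  have "g j \<le> g (int m)" for j
  proof (cases "j < 0")
    case True
    then show ?thesis using ulc_seqD(1,2)[OF g] by simp
  next
    case False
    then obtain n where n: "j = int n" by (metis nonneg_int_cases not_less)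
    show ?thesis
    proof (cases "n \<le> N")
      case True
      then show ?thesis using n m_max by simp
    next
      case False
      then have "g (int n) < g (int k0)" using N by simp
      also have "\<dots> \<le> g (int m)" using m_max \<open>k0 < N\<close> by simp
      finally show ?thesis using n by simp
    qed
  qed
  moreover have "L \<le> N" if "\<forall>j. g j \<le> g (int L)" for L
  proof (rule ccontr)
    assume "\<not> L \<le> N"
    then have "g (int L) < g (int k0)" using N by simp
    moreover have "g (int k0) \<le> g (int L)" using that by blast
    ultimately show False by simp
  qed
  ultimately show ?thesis using that by blast
qed

lemma is_lead_mode_exists:
  assumes g: "ulc_seq g"
  shows "\<exists>L. is_lead_mode g L"
proof -
  obtain m N where m: "\<And>j. g j \<le> g (int m)" and N: "\<And>L. \<forall>j. g j \<le> g (int L) \<Longrightarrow> L \<le> N"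
    using ulc_seq_max_attained[OF g] by blast
  define S where "S = {L. \<forall>j. g j \<le> g (int L)}"
  obtain L where L: "L \<in> S" "\<And>L'. L' \<in> S \<Longrightarrow> L' \<le> L"
    using Nat.ex_has_greatest_nat[of "\<lambda>L. L \<in> S" m N] m N unfolding S_def by blast
  have "g j < g (int L)" if "int L < j" for j
  proof -
    have "g j \<le> g (int L)" using L(1) by (simp add: S_def)
    moreover have "g j \<noteq> g (int L)"
    proof
      assume "g j = g (int L)"
      then have "nat j \<in> S" using L(1) that by (simp add: S_def)
      then show False using L(2)[of "nat j"] that by simp
    qed
    ultimately show ?thesis by simp
  qed
  then show ?thesis using L(1) unfolding is_lead_mode_def S_def by blast
qed

definition lead_mode :: "(int \<Rightarrow> real) \<Rightarrow> nat" where
  "lead_mode g = (THE L. is_lead_mode g L)"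

lemma lead_mode_is_lead_mode:
  assumes "ulc_seq g"
  shows "is_lead_mode g (lead_mode g)"
  unfolding lead_mode_def using is_lead_mode_exists[OF assms] is_lead_mode_unique by (metis theI)

lemma lead_mode_eqI: "ulc_seq g \<Longrightarrow> is_lead_mode g L \<Longrightarrow> lead_mode g = L"
  using lead_mode_is_lead_mode is_lead_mode_unique by blast

lemma lead_mode_max: "ulc_seq g \<Longrightarrow> g j \<le> g (int (lead_mode g))"
  using lead_mode_is_lead_mode unfolding is_lead_mode_def by blast

lemma lead_mode_above: "ulc_seq g \<Longrightarrow> int (lead_mode g) < j \<Longrightarrow> g j < g (int (lead_mode g))"
  using lead_mode_is_lead_mode unfolding is_lead_mode_def by blast

lemma lead_mode_pos:
  assumes "ulc_seq g"
  shows "0 < g (int (lead_mode g))"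
proof -
  obtain k0 :: nat where "0 < g (int k0)" using ulc_seq_pos[OF assms] by blast
  then show ?thesis using lead_mode_max[OF assms, of "int k0"] by linarith
qed

lemma ulc_seq_step_up:
  assumes "ulc_seq g" "j < int (lead_mode g)"
  shows "g j \<le> g (j + 1)"
proof (rule ccontr)
  assume "\<not> g j \<le> g (j + 1)"
  then have c: "g (j + 1) < g j" by simp
  let ?L = "int (lead_mode g)"
  have "g j * g ?L \<le> g (j + 1) * g (?L - 1)"
    using ulc_seq_log_concave[OF assms(1), of j "?L - 1"] assms(2) by simp
  also have "\<dots> \<le> g (j + 1) * g ?L"
    using lead_mode_max[OF assms(1)] ulc_seqD(1)[OF assms(1)] by (intro mult_left_mono) auto
  finally have "g j * g ?L \<le> g (j + 1) * g ?L" .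
  then have "g j \<le> g (j + 1)" using lead_mode_pos[OF assms(1)]
    by (simp add: mult_le_cancel_right)
  then show False using c by simp
qed

lemma ulc_seq_step_down:
  assumes "ulc_seq g" "int (lead_mode g) \<le> j"
  shows "g (j + 1) \<le> g j"
proof (rule ccontr)
  assume "\<not> g (j + 1) \<le> g j"
  then have c: "g j < g (j + 1)" by simp
  let ?L = "int (lead_mode g)"
  have d: "g (?L + 1) < g ?L" using lead_mode_above[OF assms(1), of "?L + 1"] by simp
  have p: "0 < g (j + 1)" using c ulc_seqD(1)[OF assms(1), of j] by linarith
  have "g (?L + 1) * g j \<le> g (?L + 1) * g (j + 1)"
    using c ulc_seqD(1)[OF assms(1)] by (intro mult_left_mono) auto
  also have "\<dots> < g ?L * g (j + 1)"
    using d p by (intro mult_strict_right_mono) auto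
  finally have "g (?L + 1) * g j < g ?L * g (j + 1)" .
  moreover have "g ?L * g (j + 1) \<le> g (?L + 1) * g j"
    using ulc_seq_log_concave[OF assms(1) assms(2)] .
  ultimately show False by simp
qed

lemma ulc_seq_mono_before:
  assumes g: "ulc_seq g" and "i \<le> j" "j \<le> int (lead_mode g)"
  shows "g i \<le> g j"
  using assms(2,3)
proof (induction j rule: int_ge_induct)
  case (step j)
  then show ?case using ulc_seq_step_up[OF g, of j] by simp
qed simp

lemma ulc_seq_antimono_after:
  assumes g: "ulc_seq g" and "int (lead_mode g) \<le> i" "i \<le> j"
  shows "g j \<le> g i"
  using assms(3)
proof (induction j rule: int_ge_induct)
  case (step j)
  then show ?case using ulc_seq_step_down[OF g, of j] assms(2) by simp
qed simp

lemma the_lead_mode_eq: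
  assumes "ulc_seq g"
  shows "(THE k::nat. g (int k - 1) \<le> g (int k) \<and> g (int k) > g (int k + 1)) = lead_mode g"
proof (rule the_equality)
  show "g (int (lead_mode g) - 1) \<le> g (int (lead_mode g)) \<and> g (int (lead_mode g)) > g (int (lead_mode g) + 1)"
    using lead_mode_max[OF assms] lead_mode_above[OF assms] by auto
next
  fix k :: nat assume k: "g (int k - 1) \<le> g (int k) \<and> g (int k) > g (int k + 1)"
  let ?L = "lead_mode g"
  show "k = ?L"
  proof (rule ccontr)
    assume "k \<noteq> ?L"
    then consider "k < ?L" | "?L < k" by linarith
    then show False
    proof cases
      case 1
      then show False using ulc_seq_step_up[OF assms, of "int k"] k by auto
    next
      case 2
      have e: "g (int k) \<le> g (int k - 1)" using ulc_seq_step_down[OF assms, of "int k - 1"] 2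
        by auto
      have pk: "0 < g (int k)" using k ulc_seqD(1)[OF assms, of "int k + 1"] by linarith
      have "g (int ?L) * g (int k) \<le> g (int ?L + 1) * g (int k - 1)"
        using ulc_seq_log_concave[OF assms, of "int ?L" "int k - 1"] 2 by simp
      also have "\<dots> = g (int ?L + 1) * g (int k)" using e k by simp
      finally have "g (int ?L) \<le> g (int ?L + 1)" using pk by (simp add: mult_le_cancel_right)
      then show False using lead_mode_above[OF assms, of "int ?L + 1"] by simp
    qed
  qed
qed

definition low_mode :: "(int \<Rightarrow> real) \<Rightarrow> nat" where
  "low_mode g = (if g (int (lead_mode g) - 1) = g (int (lead_mode g)) then lead_mode g - 1 else lead_mode g)"

lemma lead_mode_le_low_mode_Suc: "lead_mode g \<le> low_mode g + 1" unfolding low_mode_def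
  by (cases "lead_mode g") auto

lemma ulc_no_plateau:
  assumes U: "ulc g" and k: "1 \<le> k" and eq: "g (k - 1) = g k" "g (k + 1) = g k"
  shows "g k = 0"
proof -
  have "of_int (k + 1) * g (k - 1) * g (k + 1) \<le> of_int (k - 1 + 1) * g (k - 1 + 1) * g k"
    using k by (intro ulcD[OF U]) auto
  then have "(of_int k + 1) * (g k)\<^sup>2 \<le> of_int k * (g k)\<^sup>2"
    using eq by (simp add: power2_eq_square algebra_simps)
  then have "(g k)\<^sup>2 \<le> 0" by (simp add: algebra_simps)
  then show ?thesis by simp
qed

lemma lead_mode_pos_of_plateau:
  assumes g: "ulc_seq g" and "g (int (lead_mode g) - 1) = g (int (lead_mode g))"
  shows "0 < lead_mode g"
  using assms lead_mode_pos[OF g] ulc_seqD(2)[OF g, of "-1"] by (cases "lead_mode g") auto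

lemma low_mode_max:
  assumes g: "ulc_seq g"
  shows "g (int (low_mode g)) = g (int (lead_mode g))"
  using lead_mode_pos_of_plateau[OF g] by (auto simp: low_mode_def of_nat_diff)

lemma low_mode_below:
  assumes g: "ulc_seq g" and j: "j < int (low_mode g)"
  shows "g j < g (int (lead_mode g))"
proof (cases "g (int (lead_mode g) - 1) = g (int (lead_mode g))")
  case False
  let ?L = "int (lead_mode g)"
  have "g j \<le> g (?L - 1)" using j False
    by (intro ulc_seq_mono_before[OF g]) (auto simp: low_mode_def)
  moreover have "g (?L - 1) < g ?L" using False lead_mode_max[OF g, of "?L - 1"] by simp
  ultimately show ?thesis by simp
next
  case True
  let ?L = "int (lead_mode g)"
  have "int (low_mode g) = ?L - 1"
    using True lead_mode_pos_of_plateau[OF g] by (simp add: low_mode_def of_nat_diff)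
  then have "g j \<le> g (?L - 2)" "g (?L - 2) \<le> g (?L - 1)"
    using j by (auto intro!: ulc_seq_mono_before[OF g])
  moreover have "g (?L - 2) \<noteq> g (?L - 1)"
  proof
    assume eq: "g (?L - 2) = g (?L - 1)"
    then have "0 \<le> ?L - 2"
      using True lead_mode_pos[OF g] ulc_seqD(2)[OF g, of "?L - 2"] by (cases "?L - 2 < 0") auto
    then have "g (?L - 1) = 0" using eq True by (intro ulc_no_plateau[OF ulc_seqD(5)[OF g]]) auto
    then show False using True lead_mode_pos[OF g] by simp
  qed
  ultimately show ?thesis using True by linarith
qed

lemma ulc_seq_mode_iff:
  assumes "ulc_seq g"
  shows "(\<forall>j. g j \<le> g (int k)) \<longleftrightarrow> low_mode g \<le> k \<and> k \<le> lead_mode g"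
proof
  assume h: "\<forall>j. g j \<le> g (int k)"
  then have e: "g (int k) = g (int (lead_mode g))" using lead_mode_max[OF assms, of "int k"]
    by (simp add: order_antisym)
  have "k \<le> lead_mode g"
  proof (rule ccontr)
    assume "\<not> k \<le> lead_mode g"
    then have "int (lead_mode g) < int k" by simp
    then show False using lead_mode_above[OF assms, of "int k"] e by simp
  qed
  moreover have "low_mode g \<le> k"
  proof (rule ccontr)
    assume "\<not> low_mode g \<le> k"
    then have "int k < int (low_mode g)" by simp
    then show False using low_mode_below[OF assms, of "int k"] e by simp
  qed
  ultimately show "low_mode g \<le> k \<and> k \<le> lead_mode g" by simp
next
  assume h: "low_mode g \<le> k \<and> k \<le> lead_mode g"
  then consider "k = lead_mode g" | "k = low_mode g" using lead_mode_le_low_mode_Suc[of g]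
    by linarith
  then have "g (int k) = g (int (lead_mode g))" using low_mode_max[OF assms] by cases auto
  then show "\<forall>j. g j \<le> g (int k)" using lead_mode_max[OF assms] by simp
qed

lemma lead_mode_gap_above:
  assumes "ulc_seq g"
  shows "\<exists>\<eta>>0. \<forall>j. int (lead_mode g) < j \<longrightarrow> g j \<le> g (int (lead_mode g)) - \<eta>"
proof -
  let ?L = "lead_mode g"
  define M where "M = g (int ?L)"
  have M0: "0 < M" using lead_mode_pos[OF assms] by (simp add: M_def)
  from LIMSEQ_D[OF ulc_seqD(3)[OF assms], of "M / 2"] M0 obtain N where
    N: "\<And>n. n \<ge> N \<Longrightarrow> norm (g (int n) - 0) < M / 2" by auto
  define T where "T = (\<lambda>j. g (int j)) ` {Suc ?L..N}"
  define mx where "mx = Max (insert (M / 2) T)"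
  have finT: "finite (insert (M / 2) T)" by (simp add: T_def)
  have mxlt: "mx < M"
  proof -
    have "mx \<in> insert (M / 2) T" unfolding mx_def by (rule Max_in[OF finT]) simp
    moreover have "x < M" if "x \<in> insert (M / 2) T" for x
      using that M0 lead_mode_above[OF assms] by (auto simp: T_def M_def)
    ultimately show ?thesis by blast
  qed
  have "g j \<le> mx" if "int ?L < j" for j
  proof -
    have "0 \<le> j" using that by simp
    then obtain n where n: "j = int n" using nonneg_int_cases by blast
    show ?thesis
    proof (cases "n \<le> N")
      case True
      then have "g j \<in> insert (M / 2) T" using that n by (auto simp: T_def)
      then show ?thesis unfolding mx_def using finT by (intro Max_ge) auto
    next
      case False
      then have "g j < M / 2" using N[of n] n ulc_seqD(1)[OF assms, of j] by auto
      moreover have "M / 2 \<le> mx" unfolding mx_def using finT by (intro Max_ge) auto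
      ultimately show ?thesis by simp
    qed
  qed
  then show ?thesis using mxlt by (intro exI[of _ "M - mx"]) (auto simp: M_def)
qed

lemma low_mode_gap_below:
  assumes "ulc_seq g"
  shows "\<exists>\<eta>>0. \<forall>j. j < int (low_mode g) \<longrightarrow> g j \<le> g (int (lead_mode g)) - \<eta>"
proof -
  define M where "M = g (int (lead_mode g))"
  have M0: "0 < M" using lead_mode_pos[OF assms] by (simp add: M_def)
  define T where "T = (\<lambda>j. g (int j)) ` {..<low_mode g}"
  define mx where "mx = Max (insert 0 T)"
  have finT: "finite (insert 0 T)" by (simp add: T_def)
  have mxlt: "mx < M"
  proof -
    have "mx \<in> insert 0 T" unfolding mx_def by (rule Max_in[OF finT]) simp
    moreover have "x < M" if "x \<in> insert 0 T" for x
      using that M0 low_mode_below[OF assms] by (auto simp: T_def M_def)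
    ultimately show ?thesis by blast
  qed
  have "g j \<le> mx" if "j < int (low_mode g)" for j
  proof (cases "j < 0")
    case True
    then have "g j = 0" using ulc_seqD(2)[OF assms] by simp
    then show ?thesis unfolding mx_def using finT by (simp add: Max_ge)
  next
    case False
    then have "0 \<le> j" by simp
    then obtain n where n: "j = int n" using nonneg_int_cases by blast
    then have "g j \<in> insert 0 T" using that by (auto simp: T_def)
    then show ?thesis unfolding mx_def using finT by (intro Max_ge) auto
  qed
  then show ?thesis using mxlt by (intro exI[of _ "M - mx"]) (auto simp: M_def)
qed

lemma lead_mode_notin_of_close:
  assumes h: "ulc_seq h" and gap: "\<And>j. j \<in> J \<Longrightarrow> f j \<le> f k - \<eta>"
    and close: "\<And>j. \<bar>h j - f j\<bar> < \<eta> / 2"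
  shows "int (lead_mode h) \<notin> J"
proof
  assume "int (lead_mode h) \<in> J"
  then have "f (int (lead_mode h)) \<le> f k - \<eta>" by (rule gap)
  then have "h (int (lead_mode h)) < f k - \<eta> / 2" using close[of "int (lead_mode h)"]
    by linarith
  moreover have "f k - \<eta> / 2 < h k" using close[of k] by linarith
  ultimately show False using lead_mode_max[OF h, of k] by simp
qed

section \<open>Modes under Bernoulli convolution\<close>

lemma ulc_shift_ineq:
  assumes U: "ulc g" and nn: "\<And>k. 0 \<le> g k" and s0: "supp_nat g" and ij: "0 \<le> i" "i \<le> j"
  shows "of_int (j + 1) * (g (i - 1) * g j) \<le> of_int (i + 1) * (g i * g (j - 1))"
proof (cases "i = 0")
  case True
  then show ?thesis using s0 nn ij by (simp add: supp_nat_def)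
next
  case False
  define X where "X = g (i - 1) * g j"
  define Y where "Y = g i * g (j - 1)"
  have "of_int (j - 1 + 1) * g (i - 1) * g (j - 1 + 1) \<le> of_int (i - 1 + 1) * g (i - 1 + 1) * g (j - 1)"
    using ij by (intro ulcD[OF U]) auto
  then have jX: "of_int j * X \<le> of_int i * Y" by (simp add: X_def Y_def mult.assoc)
  also have "\<dots> \<le> of_int j * Y" using ij nn by (intro mult_right_mono) (auto simp: Y_def)
  finally have "X \<le> Y" using False ij by (simp add: mult_le_cancel_left)
  then have "of_int (j + 1) * X \<le> of_int (i + 1) * Y" using jX by (simp add: algebra_simps)
  then show ?thesis by (simp add: X_def Y_def)
qed

lemma ulc_cross_ineq:
  assumes U: "ulc g" and ij: "0 \<le> i" "i \<le> j"
  shows "of_int (j + 1) * (g i * g j + g (i - 1) * g (j + 1))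
    \<le> of_int (i + 1) * (g (i + 1) * g (j - 1) + g i * g j)"
proof (cases "i = j")
  case True
  then show ?thesis by (simp add: algebra_simps)
next
  case False
  have "of_int (j + 1) * (g (i - 1) * g (j + 1)) \<le> of_int i * (g i * g j)"
    using ulcD[OF U, of "i - 1" j] ij by (simp add: mult.assoc)
  moreover have "of_int j * (g i * g j) \<le> of_int (i + 1) * (g (i + 1) * g (j - 1))"
    using ulcD[OF U, of i "j - 1"] ij False by (simp add: mult.assoc)
  ultimately show ?thesis by (simp add: algebra_simps)
qed

lemma ulc_bconv:
  assumes U: "ulc g" and nn: "\<And>k. 0 \<le> g k" and s0: "supp_nat g" and t: "0 \<le> t" "t \<le> 1"
  shows "ulc (bconv t g)"
  unfolding ulc_def
proof (intro allI impI)
  fix i j :: int assume ij: "-1 \<le> i" "i \<le> j"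
  let ?h = "bconv t g"
  show "of_int (j + 1) * ?h i * ?h (j + 1) \<le> of_int (i + 1) * ?h (i + 1) * ?h j"
  proof (cases "i = -1")
    case True
    then show ?thesis using s0 by (simp add: bconv_def supp_nat_def)
  next
    case False
    then have i0: "0 \<le> i" using ij by simp
    have L: "of_int (j + 1) * ?h i * ?h (j + 1) =
        (1 - t)\<^sup>2 * (of_int (j + 1) * g i * g (j + 1))
      + t * (1 - t) * (of_int (j + 1) * (g i * g j + g (i - 1) * g (j + 1)))
      + t\<^sup>2 * (of_int (j + 1) * (g (i - 1) * g j))"
      by (simp add: bconv_def algebra_simps power2_eq_square)
    have R: "of_int (i + 1) * ?h (i + 1) * ?h j =
        (1 - t)\<^sup>2 * (of_int (i + 1) * g (i + 1) * g j)
      + t * (1 - t) * (of_int (i + 1) * (g (i + 1) * g (j - 1) + g i * g j))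
      + t\<^sup>2 * (of_int (i + 1) * (g i * g (j - 1)))"
      by (simp add: bconv_def algebra_simps power2_eq_square)
    show ?thesis
      unfolding L R using t
      by (intro add_mono mult_left_mono ulcD[OF U ij] ulc_cross_ineq[OF U i0 ij(2)]
          ulc_shift_ineq[OF U nn s0 i0 ij(2)]) auto
  qed
qed

lemma ulc_seq_bconv:
  assumes "ulc_seq g" "0 \<le> t" "t \<le> 1"
  shows "ulc_seq (bconv t g)"
proof -
  have nn: "\<And>k. 0 \<le> g k" and s0: "supp_nat g" and lim: "(\<lambda>n. g (int n)) \<longlonglongrightarrow> 0"
    and ex: "\<exists>k. g k \<noteq> 0" and U: "ulc g"
    using assms(1) by (auto simp: ulc_seq_def)
  have "(\<lambda>n. g (int (Suc n) - 1)) \<longlonglongrightarrow> 0" using lim by simp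
  then have lim2: "(\<lambda>n. g (int n - 1)) \<longlonglongrightarrow> 0" by (rule LIMSEQ_imp_Suc)
  have limh: "(\<lambda>n. bconv t g (int n)) \<longlonglongrightarrow> 0"
    unfolding bconv_def
      using tendsto_add[OF tendsto_mult_left[OF lim, of "1 - t"] tendsto_mult_left[OF lim2, of t]]
    by simp
  obtain k where k: "g k \<noteq> 0" using ex by blast
  then have gk: "0 < g k" using nn[of k] by simp
  have exh: "\<exists>k. bconv t g k \<noteq> 0"
  proof (cases "t < 1")
    case True
    have "0 < (1 - t) * g k" using True gk by simp
    moreover have "0 \<le> t * g (k - 1)" using assms nn by simp
    ultimately have "bconv t g k \<noteq> 0" by (simp add: bconv_def)
    then show ?thesis by blast
  next
    case False
    then have "t = 1" using assms by simp
    then have "bconv t g (k + 1) = g k" by (simp add: bconv_def)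
    then show ?thesis using k by metis
  qed
  have nnh: "\<And>k. 0 \<le> bconv t g k" using assms nn by (simp add: bconv_def)
  show ?thesis unfolding ulc_seq_def
    using nnh supp_nat_bconv[OF s0] limh exh ulc_bconv[OF U nn s0 assms(2,3)] by blast
qed

lemma ulc_seq_bconvs:
  assumes "ulc_seq g" "unit_valued p"
  shows "ulc_seq (bconvs g p n)"
  by (induction n) (use assms in \<open>auto simp: unit_valued_def intro!: ulc_seq_bconv\<close>)

lemma bconv_apply: "bconv t g k = (1 - t) * g k + t * g (k - 1)"
  by (simp add: bconv_def)

lemma bconv_sub_bconv: "bconv t' G k - bconv t G k = (t' - t) * (G (k - 1) - G k)"
  by (simp add: bconv_def algebra_simps)

lemma lead_mode_le_bconv:
  assumes "ulc_seq G" "0 \<le> t" "t \<le> 1"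
  shows "lead_mode G \<le> lead_mode (bconv t G)"
proof (rule ccontr)
  assume "\<not> lead_mode G \<le> lead_mode (bconv t G)"
  then have lt: "lead_mode (bconv t G) < lead_mode G" by simp
  have gh: "ulc_seq (bconv t G)" using ulc_seq_bconv assms by blast
  let ?L = "int (lead_mode G)" and ?m = "int (lead_mode (bconv t G))"
  have "bconv t G ?m \<le> bconv t G ?L"
    unfolding bconv_apply[of t G ?m] bconv_apply[of t G ?L]
  proof (intro add_mono mult_left_mono)
    show "G ?m \<le> G ?L" by (rule lead_mode_max[OF assms(1)])
    show "G (?m - 1) \<le> G (?L - 1)" using lt by (intro ulc_seq_mono_before[OF assms(1)]) auto
  qed (use assms in auto)
  moreover have "bconv t G ?L < bconv t G ?m" using lead_mode_above[OF gh, of ?L] lt by simp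
  ultimately show False by simp
qed

lemma lead_mode_bconv_le:
  assumes "ulc_seq G" "0 \<le> t" "t \<le> 1"
  shows "lead_mode (bconv t G) \<le> lead_mode G + 1"
proof (cases "t = 0")
  case True then show ?thesis by simp
next
  case False
  then have t0: "0 < t" using assms by simp
  show ?thesis
  proof (rule ccontr)
    assume "\<not> lead_mode (bconv t G) \<le> lead_mode G + 1"
    then have lt: "lead_mode G + 1 < lead_mode (bconv t G)" by simp
    have gh: "ulc_seq (bconv t G)" using ulc_seq_bconv assms by blast
    let ?L = "int (lead_mode G)" and ?m = "int (lead_mode (bconv t G))"
    have a1: "G ?m \<le> G (?L + 1)" using lt by (intro ulc_seq_antimono_after[OF assms(1)]) auto
    have a2: "G (?m - 1) < G ?L" using lt by (intro lead_mode_above[OF assms(1)]) auto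
    have "bconv t G ?m < bconv t G (?L + 1)"
      unfolding bconv_apply[of t G ?m] bconv_apply[of t G "?L + 1"] using a1 a2 t0 assms(3)
      by (intro add_le_less_mono mult_left_mono mult_strict_left_mono) auto
    moreover have "bconv t G (?L + 1) \<le> bconv t G ?m" by (rule lead_mode_max[OF gh])
    ultimately show False by simp
  qed
qed

lemma lead_mode_bconv_mono:
  assumes "ulc_seq G" "0 \<le> t" "t \<le> t'" "t' \<le> 1"
  shows "lead_mode (bconv t G) \<le> lead_mode (bconv t' G)"
proof (rule ccontr)
  assume "\<not> lead_mode (bconv t G) \<le> lead_mode (bconv t' G)"
  then have lt: "lead_mode (bconv t' G) < lead_mode (bconv t G)" by simp
  have u: "lead_mode (bconv t G) \<le> lead_mode G + 1" using lead_mode_bconv_le assms by simp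
  have l: "lead_mode G \<le> lead_mode (bconv t' G)" using lead_mode_le_bconv assms by simp
  have m: "lead_mode (bconv t G) = lead_mode G + 1" "lead_mode (bconv t' G) = lead_mode G"
    using u l lt by auto
  have gh: "ulc_seq (bconv t G)" "ulc_seq (bconv t' G)" using ulc_seq_bconv assms by auto
  let ?L = "int (lead_mode G)"
  have mm: "int (lead_mode (bconv t G)) = ?L + 1" using m by simp
  have h1: "bconv t G ?L \<le> bconv t G (?L + 1)" using lead_mode_max[OF gh(1), of ?L]
    unfolding mm .
  have h2: "bconv t' G (?L + 1) < bconv t' G ?L" using lead_mode_above[OF gh(2), of "?L + 1"] m
    by simp
  define x where "x = G (?L + 1) - G ?L"
  define y where "y = G ?L - G (?L - 1)"
  have x: "x < 0" using lead_mode_above[OF assms(1), of "?L + 1"] by (simp add: x_def)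
  have y: "0 \<le> y" using lead_mode_max[OF assms(1), of "?L - 1"] by (simp add: y_def)
  have e1: "0 \<le> (1 - t) * x + t * y" using h1 by (simp add: bconv_def x_def y_def algebra_simps)
  have e2: "(1 - t') * x + t' * y < 0" using h2 by (simp add: bconv_def x_def y_def algebra_simps)
  have "(1 - t') * x + t' * y - ((1 - t) * x + t * y) = (t' - t) * (y - x)"
    by (simp add: algebra_simps)
  moreover have "0 \<le> (t' - t) * (y - x)" using assms x y by simp
  ultimately show False using e1 e2 by linarith
qed

lemma bconv_mono_above_mode:
  assumes "ulc_seq G" "0 \<le> t" "t \<le> t'" "t' \<le> 1" "int (lead_mode (bconv t' G)) < k"
  shows "bconv t G k \<le> bconv t' G k"
proof -
  have "lead_mode G \<le> lead_mode (bconv t' G)" using lead_mode_le_bconv assms by simp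
  then have "G k \<le> G (k - 1)" using assms(5) by (intro ulc_seq_antimono_after[OF assms(1)]) auto
  then have "0 \<le> bconv t' G k - bconv t G k" unfolding bconv_sub_bconv using assms by simp
  then show ?thesis by simp
qed

lemma bconv_antimono_below_mode:
  assumes "ulc_seq G" "0 \<le> t" "t \<le> t'" "t' \<le> 1" "k < int (lead_mode (bconv t G))"
  shows "bconv t' G k \<le> bconv t G k"
proof -
  have "lead_mode (bconv t G) \<le> lead_mode G + 1" using lead_mode_bconv_le assms by simp
  then have "G (k - 1) \<le> G k" using assms(5) by (intro ulc_seq_mono_before[OF assms(1)]) auto
  then have "bconv t' G k - bconv t G k \<le> 0" unfolding bconv_sub_bconv using assms
    by (simp add: mult_nonneg_nonpos)
  then show ?thesis by simp
qed

definition mix_seq :: "(nat \<Rightarrow> real) \<Rightarrow> (nat \<Rightarrow> real) \<Rightarrow> nat \<Rightarrow> nat \<Rightarrow> real" where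
  "mix_seq a b s = (\<lambda>i. if i < s then b i else a i)"

lemma bconvs_mix_seq_step:
  assumes "s < n"
  shows "bconvs g (mix_seq a b s) n = bconv (a s) (bconvs g ((mix_seq a b s)(s := 0)) n)"
    "bconvs g (mix_seq a b (Suc s)) n = bconv (b s) (bconvs g ((mix_seq a b s)(s := 0)) n)"
proof -
  show "bconvs g (mix_seq a b s) n = bconv (a s) (bconvs g ((mix_seq a b s)(s := 0)) n)"
    using bconvs_extract[OF assms, of g "mix_seq a b s"] by (simp add: mix_seq_def)
  have "(mix_seq a b (Suc s))(s := 0) = (mix_seq a b s)(s := 0)"
    by (auto simp: mix_seq_def fun_eq_iff)
  then show "bconvs g (mix_seq a b (Suc s)) n = bconv (b s) (bconvs g ((mix_seq a b s)(s := 0)) n)"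
    using bconvs_extract[OF assms, of g "mix_seq a b (Suc s)"] by (simp add: mix_seq_def)
qed

lemma unit_valued_mix_seq: "unit_valued a \<Longrightarrow> unit_valued b \<Longrightarrow> unit_valued ((mix_seq a b s)(j := 0))"
  by (auto simp: unit_valued_def mix_seq_def)

lemma mix_seq_0: "mix_seq a b 0 = a" by (simp add: mix_seq_def fun_eq_iff)

lemma bconvs_mix_seq_full: "bconvs g (mix_seq a b n) n = bconvs g b n"
  by (rule bconvs_cong) (simp add: mix_seq_def)

lemma bconvs_mono_above_mode:
  assumes g: "ulc_seq g" and ua: "unit_valued a" and ub: "unit_valued b" and ab: "\<And>i. a i \<le> b i"
    and k: "int (lead_mode (bconvs g b n)) < k"
  shows "bconvs g a n k \<le> bconvs g b n k" and "lead_mode (bconvs g a n) \<le> lead_mode (bconvs g b n)"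
proof -
  have "lead_mode (bconvs g (mix_seq a b s) n) \<le> lead_mode (bconvs g b n)
      \<and> bconvs g (mix_seq a b s) n k \<le> bconvs g b n k" if "s \<le> n" for s
    using that
  proof (induction s rule: inc_induct)
    case base
    then show ?case by (simp add: bconvs_mix_seq_full)
  next
    case (step s)
    define G where "G = bconvs g ((mix_seq a b s)(s := 0)) n"
    have gG: "ulc_seq G" unfolding G_def by (intro ulc_seq_bconvs g unit_valued_mix_seq ua ub)
    have t: "0 \<le> a s" "a s \<le> b s" "b s \<le> 1" using ua ub ab
      by (auto simp: unit_valued_def)
    have IH: "lead_mode (bconv (b s) G) \<le> lead_mode (bconvs g b n)" "bconv (b s) G k \<le> bconvs g b n k"
      using step.IH bconvs_mix_seq_step(2)[OF step.hyps(2)] by (simp_all add: G_def)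
    have "lead_mode (bconv (a s) G) \<le> lead_mode (bconv (b s) G)"
      by (rule lead_mode_bconv_mono[OF gG t])
    moreover have "bconv (a s) G k \<le> bconv (b s) G k"
      by (rule bconv_mono_above_mode[OF gG t]) (use IH k in linarith)
    ultimately show ?case using IH bconvs_mix_seq_step(1)[OF step.hyps(2)] by (simp add: G_def)
  qed
  from this[of 0] show "bconvs g a n k \<le> bconvs g b n k" "lead_mode (bconvs g a n) \<le> lead_mode (bconvs g b n)"
    by (simp_all add: mix_seq_0)
qed

lemma bconvs_antimono_below_mode:
  assumes g: "ulc_seq g" and ua: "unit_valued a" and ub: "unit_valued b" and ab: "\<And>i. a i \<le> b i"
    and k: "k < int (lead_mode (bconvs g a n))"
  shows "bconvs g b n k \<le> bconvs g a n k"
proof -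
  have "lead_mode (bconvs g a n) \<le> lead_mode (bconvs g (mix_seq a b s) n)
      \<and> bconvs g (mix_seq a b s) n k \<le> bconvs g a n k" if "s \<le> n" for s
    using that
  proof (induction s)
    case 0
    then show ?case by (simp add: mix_seq_0)
  next
    case (Suc s)
    then have sn: "s < n" by simp
    define G where "G = bconvs g ((mix_seq a b s)(s := 0)) n"
    have gG: "ulc_seq G" unfolding G_def by (intro ulc_seq_bconvs g unit_valued_mix_seq ua ub)
    have t: "0 \<le> a s" "a s \<le> b s" "b s \<le> 1" using ua ub ab
      by (auto simp: unit_valued_def)
    have IH: "lead_mode (bconvs g a n) \<le> lead_mode (bconv (a s) G)" "bconv (a s) G k \<le> bconvs g a n k"
      using Suc bconvs_mix_seq_step(1)[OF sn] by (simp_all add: G_def)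
    have "lead_mode (bconv (a s) G) \<le> lead_mode (bconv (b s) G)"
      by (rule lead_mode_bconv_mono[OF gG t])
    moreover have "bconv (b s) G k \<le> bconv (a s) G k"
      by (rule bconv_antimono_below_mode[OF gG t]) (use IH k in linarith)
    ultimately show ?case using IH bconvs_mix_seq_step(2)[OF sn] by (simp add: G_def)
  qed
  from this[of n] show ?thesis by (simp add: bconvs_mix_seq_full)
qed

section \<open>The distribution f as a limit of finite convolutions\<close>

definition pb_param :: "real \<Rightarrow> (nat \<Rightarrow> real) \<Rightarrow> bool" where
  "pb_param l p \<longleftrightarrow> 0 \<le> l \<and> unit_valued p \<and> summable p"

lemma nabla_pb_param:
  assumes "q \<in> nabla"
  shows "pb_param (fst q) (snd q)"
proof -
  obtain l p where q: "q = (l, p)" by (cases q)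
  have h: "0 \<le> l" "p 0 \<le> 1" "\<And>i. p (Suc i) \<le> p i" "\<And>i. 0 \<le> p i" "summable p"
    using assms by (auto simp: nabla_def q)
  have "p i \<le> 1" for i using decseqD[OF decseq_SucI[of p, OF h(3)], of 0 i] h(2) by simp
  then show ?thesis using h by (simp add: pb_param_def unit_valued_def q)
qed

lemma pb_partial_eq_bconvs: "pb_partial l p n = bconvs (poisson l) p n"
  by (induction n) (auto simp: poisson_def bconv_def fun_eq_iff)

lemma l1_upto_bconvs_poisson_le:
  assumes "0 \<le> l" "unit_valued p"
  shows "l1_upto (bconvs (poisson l) p n) K \<le> 1"
  using l1_upto_bconvs_le[OF supp_nat_poisson assms(2), of l n K] l1_upto_poisson_le[OF assms(1), of K] by linarith

lemma bconvs_poisson_nonneg: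
  assumes "0 \<le> l" "unit_valued p"
  shows "0 \<le> bconvs (poisson l) p n k"
  by (induction n arbitrary: k) (use assms poisson_nonneg in \<open>auto simp: bconv_def unit_valued_def intro!: add_nonneg_nonneg mult_nonneg_nonneg\<close>)

lemma bconvs_poisson_le1:
  assumes "0 \<le> l" "unit_valued p"
  shows "bconvs (poisson l) p n k \<le> 1"
proof (cases "k < 0")
  case True then show ?thesis using supp_nat_bconvs[OF supp_nat_poisson, of l p n]
    by (simp add: supp_nat_def)
next
  case False
  then have "bconvs (poisson l) p n k = \<bar>bconvs (poisson l) p n (int (nat k))\<bar>"
    using bconvs_poisson_nonneg[OF assms] by simp
  also have "\<dots> \<le> l1_upto (bconvs (poisson l) p n) (nat k)" by (rule abs_le_l1_upto) auto
  finally show ?thesis using l1_upto_bconvs_poisson_le[OF assms, of n "nat k"] by linarith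
qed

lemma bconvs_poisson_step_le:
  assumes "0 \<le> l" "unit_valued p"
  shows "\<bar>bconvs (poisson l) p (Suc n) k - bconvs (poisson l) p n k\<bar> \<le> p n"
proof -
  let ?g = "bconvs (poisson l) p n"
  have p: "0 \<le> p n" using assms(2) by (simp add: unit_valued_def)
  have "\<bar>?g (k - 1) - ?g k\<bar> \<le> 1"
    using bconvs_poisson_nonneg[OF assms, of n "k - 1"] bconvs_poisson_nonneg[OF assms, of n k]
      bconvs_poisson_le1[OF assms, of n "k - 1"] bconvs_poisson_le1[OF assms, of n k]
    by (simp add: abs_le_iff)
  then have "p n * \<bar>?g (k - 1) - ?g k\<bar> \<le> p n" using p by (simp add: mult_left_le)
  moreover have "bconvs (poisson l) p (Suc n) k - ?g k = p n * (?g (k - 1) - ?g k)"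
    by (simp add: bconv_def algebra_simps)
  ultimately show ?thesis using p by (simp add: abs_mult)
qed

lemma bconvs_tendsto_pbf:
  assumes v: "pb_param l p"
  shows "(\<lambda>n. bconvs (poisson l) p n k) \<longlonglongrightarrow> pbf k (l, p)"
proof -
  have l0: "0 \<le> l" and u: "unit_valued p" and s: "summable p" using v
    by (auto simp: pb_param_def)
  define a where "a n = bconvs (poisson l) p n k" for n
  define d where "d i = a (Suc i) - a i" for i
  have "summable d"
    by (rule summable_comparison_test[OF _ s]) (use bconvs_poisson_step_le[OF l0 u] in \<open>auto simp: d_def a_def\<close>)
  then have "(\<lambda>n. \<Sum>i<n. d i) \<longlonglongrightarrow> suminf d"
    by (rule summable_LIMSEQ)
  then have "(\<lambda>n. a 0 + (\<Sum>i<n. d i)) \<longlonglongrightarrow> a 0 + suminf d"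
    by (intro tendsto_intros)
  moreover have "a 0 + (\<Sum>i<n. d i) = a n" for n unfolding d_def sum_lessThan_telescope by simp
  ultimately have c: "a \<longlonglongrightarrow> a 0 + suminf d" by simp
  then have "convergent a" by (auto simp: convergent_def)
  moreover have ae: "a = (\<lambda>n. bconvs (poisson l) p n k)" by (simp add: a_def fun_eq_iff)
  then have "pbf k (l, p) = lim a" by (simp add: pbf_def pb_partial_eq_bconvs)
  ultimately show ?thesis unfolding ae by (simp add: convergent_LIMSEQ_iff)
qed

lemma pbf_nonneg:
  assumes "pb_param l p"
  shows "0 \<le> pbf k (l, p)"
  by (rule LIMSEQ_le_const[OF bconvs_tendsto_pbf[OF assms]])
    (use assms in \<open>auto simp: pb_param_def intro: bconvs_poisson_nonneg\<close>)

lemma pbf_neg: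
  assumes "pb_param l p" "k < 0"
  shows "pbf k (l, p) = 0"
proof -
  have "bconvs (poisson l) p n k = 0" for n
    using supp_nat_bconvs[OF supp_nat_poisson, of l p n] assms(2) by (simp add: supp_nat_def)
  then have "(\<lambda>n. bconvs (poisson l) p n k) \<longlonglongrightarrow> 0" by simp
  then show ?thesis using bconvs_tendsto_pbf[OF assms(1)] LIMSEQ_unique by blast
qed

lemma pbf_sum_le1:
  assumes "pb_param l p"
  shows "(\<Sum>j\<le>K. pbf (int j) (l, p)) \<le> 1"
proof -
  have l0: "0 \<le> l" and u: "unit_valued p" using assms by (auto simp: pb_param_def)
  have "(\<lambda>n. \<Sum>j\<le>K. bconvs (poisson l) p n (int j)) \<longlonglongrightarrow> (\<Sum>j\<le>K. pbf (int j) (l, p))"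
    by (intro tendsto_sum bconvs_tendsto_pbf[OF assms])
  moreover have "(\<Sum>j\<le>K. bconvs (poisson l) p n (int j)) \<le> 1" for n
    using l1_upto_bconvs_poisson_le[OF l0 u, of n K] bconvs_poisson_nonneg[OF l0 u]
      by (simp add: l1_upto_def)
  ultimately show ?thesis by (intro LIMSEQ_le_const2) auto
qed

lemma pbf_le1:
  assumes v: "pb_param l p"
  shows "pbf k (l, p) \<le> 1"
proof (cases "k < 0")
  case True
  then show ?thesis using pbf_neg[OF v True] by simp
next
  case False
  then obtain j where j: "k = int j" by (metis nonneg_int_cases not_less)
  have "pbf (int j) (l, p) \<le> (\<Sum>i\<le>j. pbf (int i) (l, p))"
    by (rule member_le_sum) (use pbf_nonneg[OF v] in auto)
  then show ?thesis using pbf_sum_le1[OF v, of j] j by simp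
qed

lemma pbf_tendsto_0:
  assumes "pb_param l p"
  shows "(\<lambda>n. pbf (int n) (l, p)) \<longlonglongrightarrow> 0"
proof -
  have "summable (\<lambda>n. pbf (int n) (l, p))"
  proof (rule summableI_nonneg_bounded)
    show "0 \<le> pbf (int n) (l, p)" for n using pbf_nonneg[OF assms] .
    show "(\<Sum>i<n. pbf (int i) (l, p)) \<le> 1" for n
    proof (cases n)
      case 0 then show ?thesis by simp
    next
      case (Suc m)
      then have "{..<n} = {..m}" by auto
      then show ?thesis using pbf_sum_le1[OF assms, of m] by simp
    qed
  qed
  then show ?thesis by (rule summable_LIMSEQ_zero)
qed

lemma ulc_bconvs_poisson:
  assumes "0 \<le> l" "unit_valued p"
  shows "ulc (bconvs (poisson l) p n)"
proof (induction n)
  case 0 then show ?case using ulc_poisson by simp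
next
  case (Suc n)
  show ?case using assms
    by (auto simp: unit_valued_def intro!: ulc_bconv Suc bconvs_poisson_nonneg supp_nat_bconvs supp_nat_poisson)
qed

lemma ulc_pbf:
  assumes "pb_param l p"
  shows "ulc (\<lambda>k. pbf k (l, p))"
  unfolding ulc_def
proof (intro allI impI)
  fix A B :: int assume "-1 \<le> A" "A \<le> B"
  then have "of_int (B + 1) * bconvs (poisson l) p n A * bconvs (poisson l) p n (B + 1) \<le>
      of_int (A + 1) * bconvs (poisson l) p n (A + 1) * bconvs (poisson l) p n B" for n
    using ulc_bconvs_poisson[of l p n] assms unfolding pb_param_def ulc_def by blast
  moreover have "(\<lambda>n. of_int (B + 1) * bconvs (poisson l) p n A * bconvs (poisson l) p n (B + 1)) \<longlonglongrightarrow>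
      of_int (B + 1) * pbf A (l, p) * pbf (B + 1) (l, p)"
    by (intro tendsto_intros bconvs_tendsto_pbf assms)
  moreover have "(\<lambda>n. of_int (A + 1) * bconvs (poisson l) p n (A + 1) * bconvs (poisson l) p n B) \<longlonglongrightarrow>
      of_int (A + 1) * pbf (A + 1) (l, p) * pbf B (l, p)"
    by (intro tendsto_intros bconvs_tendsto_pbf assms)
  ultimately show "of_int (B + 1) * pbf A (l, p) * pbf (B + 1) (l, p) \<le> of_int (A + 1) * pbf (A + 1) (l, p) * pbf B (l, p)"
    by (intro LIMSEQ_le) auto
qed

lemma ulc_seq_pbf:
  assumes "pb_param l p" "pbf k (l, p) \<noteq> 0"
  shows "ulc_seq (\<lambda>k. pbf k (l, p))"
  unfolding ulc_seq_def supp_nat_def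
  using pbf_nonneg[OF assms(1)] pbf_neg[OF assms(1)] pbf_tendsto_0[OF assms(1)] assms(2) ulc_pbf[OF assms(1)]
  by blast

lemma m_plus_eq_lead_mode:
  assumes "ulc_seq (\<lambda>k. pbf k q)"
  shows "m_plus q = lead_mode (\<lambda>k. pbf k q)"
  unfolding m_plus_def using the_lead_mode_eq[OF assms] by simp

lemma m_minus_eq_low_mode:
  assumes "ulc_seq (\<lambda>k. pbf k q)"
  shows "m_minus q = low_mode (\<lambda>k. pbf k q)"
  unfolding m_minus_def low_mode_def m_plus_eq_lead_mode[OF assms] by simp

lemma is_mode_iff:
  assumes "ulc_seq (\<lambda>k. pbf k q)"
  shows "is_mode k q \<longleftrightarrow> m_minus q \<le> k \<and> k \<le> m_plus q"
  unfolding is_mode_def m_plus_eq_lead_mode[OF assms] m_minus_eq_low_mode[OF assms]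
  using ulc_seq_mode_iff[OF assms, of k] by simp

lemma l1_upto_bconvs_sub_le:
  assumes "0 \<le> l" "unit_valued p" "n \<le> m"
  shows "l1_upto (\<lambda>k. bconvs (poisson l) p m k - bconvs (poisson l) p n k) K \<le> 2 * (\<Sum>i\<in>{n..<m}. p i)"
  using assms(3)
proof (induction m)
  case 0 then show ?case by (simp add: l1_upto_def)
next
  case (Suc m)
  show ?case
  proof (cases "n = Suc m")
    case True then show ?thesis by (simp add: l1_upto_def)
  next
    case False
    then have nm: "n \<le> m" using Suc by simp
    have eq: "(\<lambda>k. bconvs (poisson l) p (Suc m) k - bconvs (poisson l) p n k) =
        (\<lambda>k. (bconv (p m) (bconvs (poisson l) p m) k - bconvs (poisson l) p m k) + (bconvs (poisson l) p m k - bconvs (poisson l) p n k))"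
      by simp
    have "l1_upto (\<lambda>k. bconvs (poisson l) p (Suc m) k - bconvs (poisson l) p n k) K \<le>
        l1_upto (\<lambda>k. bconv (p m) (bconvs (poisson l) p m) k - bconvs (poisson l) p m k) K + l1_upto (\<lambda>k. bconvs (poisson l) p m k - bconvs (poisson l) p n k) K"
      unfolding eq by (rule l1_upto_add_le)
    also have "\<dots> \<le> 2 * p m * l1_upto (bconvs (poisson l) p m) K + 2 * (\<Sum>i\<in>{n..<m}. p i)"
      using assms Suc.IH[OF nm]
        by (intro add_mono l1_upto_bconv_sub_le supp_nat_bconvs supp_nat_poisson) (auto simp: unit_valued_def)
    also have "\<dots> \<le> 2 * p m + 2 * (\<Sum>i\<in>{n..<m}. p i)"
      using l1_upto_bconvs_poisson_le[OF assms(1,2), of m K] assms(2)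
        by (auto simp: unit_valued_def intro!: mult_left_le)
    also have "\<dots> = 2 * (\<Sum>i\<in>{n..<Suc m}. p i)" using nm by (simp add: algebra_simps)
    finally show ?thesis .
  qed
qed

definition tail :: "(nat \<Rightarrow> real) \<Rightarrow> nat \<Rightarrow> real" where
  "tail p n = suminf p - (\<Sum>i<n. p i)"

lemma tail_tendsto_0:
  assumes "summable p"
  shows "tail p \<longlonglongrightarrow> 0"
proof -
  have "(\<lambda>n. suminf p - (\<Sum>i<n. p i)) \<longlonglongrightarrow> suminf p - suminf p"
    by (intro tendsto_diff tendsto_const summable_LIMSEQ assms)
  then show ?thesis by (simp add: tail_def[abs_def])
qed

lemma sum_le_tail:
  assumes "summable p" "\<And>i. 0 \<le> p i" "n \<le> m"
  shows "(\<Sum>i\<in>{n..<m}. p i) \<le> tail p n"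
proof -
  have "(\<Sum>i<m. p i) \<le> suminf p" by (rule sum_le_suminf) (use assms in auto)
  moreover have "(\<Sum>i<m. p i) = (\<Sum>i<n. p i) + (\<Sum>i\<in>{n..<m}. p i)"
    using assms(3) by (metis atLeast0LessThan sum.atLeastLessThan_concat zero_le)
  ultimately show ?thesis by (simp add: tail_def)
qed

lemma pbf_bconvs_dist_le:
  assumes v: "pb_param l p"
  shows "\<bar>pbf k (l, p) - bconvs (poisson l) p n k\<bar> \<le> 2 * tail p n"
proof (cases "k < 0")
  case True
  have "(\<Sum>i<n. p i) \<le> suminf p"
    by (rule sum_le_suminf) (use v in \<open>auto simp: pb_param_def unit_valued_def\<close>)
  then show ?thesis using pbf_neg[OF v True] supp_nat_bconvs[OF supp_nat_poisson, of l p n] True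
    by (simp add: supp_nat_def tail_def)
next
  case False
  then obtain j :: nat where j: "k = int j" by (metis nonneg_int_cases not_less)
  have l0: "0 \<le> l" and u: "unit_valued p" and s: "summable p" using v
    by (auto simp: pb_param_def)
  have "\<bar>bconvs (poisson l) p m k - bconvs (poisson l) p n k\<bar> \<le> 2 * tail p n" if "m \<ge> n" for m
  proof -
    have "\<bar>bconvs (poisson l) p m k - bconvs (poisson l) p n k\<bar> \<le> l1_upto (\<lambda>k. bconvs (poisson l) p m k - bconvs (poisson l) p n k) j"
      using abs_le_l1_upto[of j j "\<lambda>k. bconvs (poisson l) p m k - bconvs (poisson l) p n k"] j by simp
    also have "\<dots> \<le> 2 * (\<Sum>i\<in>{n..<m}. p i)"
      by (rule l1_upto_bconvs_sub_le[OF l0 u that])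
    also have "\<dots> \<le> 2 * tail p n" using sum_le_tail[OF s _ that] u
      by (simp add: unit_valued_def)
    finally show ?thesis .
  qed
  moreover have "(\<lambda>m. \<bar>bconvs (poisson l) p m k - bconvs (poisson l) p n k\<bar>) \<longlonglongrightarrow> \<bar>pbf k (l, p) - bconvs (poisson l) p n k\<bar>"
    by (intro tendsto_intros bconvs_tendsto_pbf v)
  ultimately show ?thesis by (intro LIMSEQ_le_const2) auto
qed

section \<open>Monotonicity of f(k) away from the modes\<close>

text \<open>Both sequences describe 2 n Bernoulli factors: pad_seq spreads a Poisson increment
  \<delta> over n factors of size \<delta> / n behind the first n factors of p'.\<close>
definition trunc_seq :: "(nat \<Rightarrow> real) \<Rightarrow> nat \<Rightarrow> nat \<Rightarrow> real" where
  "trunc_seq p n = (\<lambda>i. if i < n then p i else 0)"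

definition pad_seq :: "(nat \<Rightarrow> real) \<Rightarrow> real \<Rightarrow> nat \<Rightarrow> nat \<Rightarrow> real" where
  "pad_seq p' \<delta> n = (\<lambda>i. if i < n then p' i else if i < 2 * n then \<delta> / real n else 0)"

lemma bconvs_trunc_seq: "bconvs g (trunc_seq p n) (2 * n) = bconvs g p n"
proof -
  have "bconvs g (trunc_seq p n) (2 * n) = bconvs g (trunc_seq p n) n"
    by (rule bconvs_zero_tail) (auto simp: trunc_seq_def)
  also have "\<dots> = bconvs g p n" by (rule bconvs_cong) (simp add: trunc_seq_def)
  finally show ?thesis .
qed

lemma bconvs_pad_seq: "bconvs g (pad_seq p' \<delta> n) (2 * n) = bconvs (bconvs g (\<lambda>_. \<delta> / real n) n) p' n"
proof -
  have "bconvs g (pad_seq p' \<delta> n) (2 * n) = bconvs (bconvs g (pad_seq p' \<delta> n) n) (\<lambda>i. pad_seq p' \<delta> n (n + i)) n"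
    using bconvs_add[of g "pad_seq p' \<delta> n" n n] by (simp add: mult_2)
  also have "\<dots> = bconvs (bconvs g (\<lambda>i. pad_seq p' \<delta> n (n + i)) n) (pad_seq p' \<delta> n) n" by (rule bconvs_commute)
  also have "bconvs g (\<lambda>i. pad_seq p' \<delta> n (n + i)) n = bconvs g (\<lambda>_. \<delta> / real n) n"
    by (rule bconvs_cong) (simp add: pad_seq_def)
  also have "bconvs (bconvs g (\<lambda>_. \<delta> / real n) n) (pad_seq p' \<delta> n) n = bconvs (bconvs g (\<lambda>_. \<delta> / real n) n) p' n"
    by (rule bconvs_cong) (simp add: pad_seq_def)
  finally show ?thesis .
qed

lemma unit_valued_trunc_seq: "unit_valued p \<Longrightarrow> unit_valued (trunc_seq p n)"
  by (auto simp: unit_valued_def trunc_seq_def)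

lemma unit_valued_pad_seq: "unit_valued p' \<Longrightarrow> 0 \<le> \<delta> \<Longrightarrow> \<delta> \<le> real n \<Longrightarrow> unit_valued (pad_seq p' \<delta> n)"
  by (auto simp: unit_valued_def pad_seq_def)

lemma trunc_seq_le_pad_seq: "(\<And>i. p i \<le> p' i) \<Longrightarrow> 0 \<le> \<delta> \<Longrightarrow> trunc_seq p n i \<le> pad_seq p' \<delta> n i"
  by (auto simp: trunc_seq_def pad_seq_def)

lemma bconvs_pad_seq_dist_le:
  assumes v': "pb_param l' p'" and l: "0 \<le> l" "l \<le> l'" and n: "0 < n" and dn: "l' - l \<le> real n"
  shows "\<bar>bconvs (poisson l) (pad_seq p' (l' - l) n) (2 * n) j - pbf j (l', p')\<bar>
    \<le> 2 * (l' - l)\<^sup>2 / real n + 2 * tail p' n"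
proof (cases "j < 0")
  case True
  have u': "unit_valued p'" and s': "summable p'" using v' by (auto simp: pb_param_def)
  have "bconvs (poisson l) (pad_seq p' (l' - l) n) (2 * n) j = 0"
    using supp_nat_bconvs[OF supp_nat_poisson] True by (simp add: supp_nat_def)
  moreover have "0 \<le> tail p' n" using sum_le_tail[OF s', of n n] u'
    by (simp add: unit_valued_def)
  ultimately show ?thesis using pbf_neg[OF v' True] by simp
next
  case False
  then obtain m where m: "j = int m" by (metis nonneg_int_cases not_less)
  define c where "c = (l' - l) / real n"
  have u': "unit_valued p'" using v' by (simp add: pb_param_def)
  have uc: "unit_valued (\<lambda>_. c)" using l n dn by (simp add: unit_valued_def c_def)
  have "l + (\<Sum>i<n. c) = l'" using n by (simp add: c_def)
  then have "\<bar>bconvs (poisson l) (pad_seq p' (l' - l) n) (2 * n) j - bconvs (poisson l') p' n j\<bar>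
      \<le> 2 * (\<Sum>i<n. c\<^sup>2)"
    using bconvs_le_cam[OF l(1) uc u', of n n m] m by (simp add: bconvs_pad_seq c_def)
  also have "\<dots> = 2 * (l' - l)\<^sup>2 / real n" using n by (simp add: c_def power2_eq_square)
  finally show ?thesis using pbf_bconvs_dist_le[OF v', of j n] by linarith
qed

lemma pad_seq_approximation:
  assumes v': "pb_param l' p'" and l: "0 \<le> l" "l \<le> l'"
  shows "\<exists>e. e \<longlonglongrightarrow> 0 \<and> (\<forall>\<^sub>F n in sequentially. unit_valued (pad_seq p' (l' - l) n) \<and>
    (\<forall>j. \<bar>bconvs (poisson l) (pad_seq p' (l' - l) n) (2 * n) j - pbf j (l', p')\<bar> \<le> e n))"
proof -
  have s': "summable p'" and u': "unit_valued p'" using v' by (auto simp: pb_param_def)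
  define e where "e n = 2 * (l' - l)\<^sup>2 / real n + 2 * tail p' n" for n
  have "e \<longlonglongrightarrow> 0 + 2 * 0" unfolding e_def
    by (intro tendsto_intros tail_tendsto_0 s')
  moreover have "\<forall>\<^sub>F n in sequentially. unit_valued (pad_seq p' (l' - l) n) \<and>
    (\<forall>j. \<bar>bconvs (poisson l) (pad_seq p' (l' - l) n) (2 * n) j - pbf j (l', p')\<bar> \<le> e n)"
    using eventually_gt_at_top[of 0] eventually_ge_at_top[of "nat \<lceil>l' - l\<rceil>"]
  proof eventually_elim
    case (elim n)
    then have "l' - l \<le> real n" by (meson of_nat_le_iff order_trans real_nat_ceiling_ge)
    then show ?case
      using elim l unit_valued_pad_seq[OF u'] bconvs_pad_seq_dist_le[OF v' l] by (simp add: e_def)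
  qed
  ultimately show ?thesis by auto
qed

lemma pbf_mono_above_mode:
  assumes v: "pb_param l p" and v': "pb_param l' p'" and ll: "l \<le> l'" and pp: "\<And>i. p i \<le> p' i"
    and g': "ulc_seq (\<lambda>k. pbf k (l', p'))" and k: "int (lead_mode (\<lambda>k. pbf k (l', p'))) < k"
  shows "pbf k (l, p) \<le> pbf k (l', p')"
proof -
  let ?f' = "\<lambda>k. pbf k (l', p')" and ?h = "\<lambda>n. bconvs (poisson l) (pad_seq p' (l' - l) n) (2 * n)"
  have l0: "0 \<le> l" and u: "unit_valued p" using v by (auto simp: pb_param_def)
  obtain e where e: "e \<longlonglongrightarrow> 0" and pad: "\<forall>\<^sub>F n in sequentially. unit_valued (pad_seq p' (l' - l) n) \<and>
      (\<forall>j. \<bar>?h n j - ?f' j\<bar> \<le> e n)"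
    using pad_seq_approximation[OF v' l0 ll] by blast
  obtain \<eta> where \<eta>: "0 < \<eta>" and gap: "\<forall>j. int (lead_mode ?f') < j \<longrightarrow> ?f' j \<le> ?f' (int (lead_mode ?f')) - \<eta>"
    using lead_mode_gap_above[OF g'] by blast
  have "\<forall>\<^sub>F n in sequentially. bconvs (poisson l) p n k \<le> ?f' k + e n"
    using pad order_tendstoD(2)[OF e half_gt_zero[OF \<eta>]]
  proof eventually_elim
    case (elim n)
    then have ub: "unit_valued (pad_seq p' (l' - l) n)" and close: "\<And>j. \<bar>?h n j - ?f' j\<bar> \<le> e n"
      by auto
    have "\<bar>?h n j - ?f' j\<bar> < \<eta> / 2" for j using close[of j] elim by linarith
    then have "int (lead_mode (?h n)) \<notin> {j. int (lead_mode ?f') < j}"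
      using gap
        by (intro lead_mode_notin_of_close[OF ulc_seq_bconvs[OF ulc_seq_poisson[OF l0] ub]]) auto
    then have "bconvs (poisson l) (trunc_seq p n) (2 * n) k \<le> ?h n k"
      using k ll
        by (intro bconvs_mono_above_mode(1)[OF ulc_seq_poisson[OF l0] unit_valued_trunc_seq[OF u] ub]
          trunc_seq_le_pad_seq[OF pp]) auto
    then show ?case using close[of k] unfolding bconvs_trunc_seq by linarith
  qed
  moreover have "(\<lambda>n. ?f' k + e n) \<longlonglongrightarrow> ?f' k"
    using tendsto_add[OF tendsto_const e] by simp
  ultimately show ?thesis
    by (intro tendsto_le[OF trivial_limit_sequentially _ bconvs_tendsto_pbf[OF v]])
qed

lemma pbf_antimono_below_mode:
  assumes v: "pb_param l p" and v': "pb_param l' p'" and ll: "l \<le> l'" and pp: "\<And>i. p i \<le> p' i"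
    and g: "ulc_seq (\<lambda>k. pbf k (l, p))" and k: "k < int (low_mode (\<lambda>k. pbf k (l, p)))"
  shows "pbf k (l', p') \<le> pbf k (l, p)"
proof -
  let ?f = "\<lambda>k. pbf k (l, p)" and ?f' = "\<lambda>k. pbf k (l', p')"
    and ?h = "\<lambda>n. bconvs (poisson l) (pad_seq p' (l' - l) n) (2 * n)"
  have l0: "0 \<le> l" and u: "unit_valued p" and s: "summable p" using v
    by (auto simp: pb_param_def)
  obtain e where e: "e \<longlonglongrightarrow> 0" and pad: "\<forall>\<^sub>F n in sequentially. unit_valued (pad_seq p' (l' - l) n) \<and>
      (\<forall>j. \<bar>?h n j - ?f' j\<bar> \<le> e n)"
    using pad_seq_approximation[OF v' l0 ll] by blast
  obtain \<eta> where \<eta>: "0 < \<eta>" and gap: "\<forall>j. j < int (low_mode ?f) \<longrightarrow> ?f j \<le> ?f (int (lead_mode ?f)) - \<eta>"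
    using low_mode_gap_below[OF g] by blast
  have "(\<lambda>n. 2 * tail p n) \<longlonglongrightarrow> 2 * 0"
    by (intro tendsto_intros tail_tendsto_0 s)
  then have t: "(\<lambda>n. 2 * tail p n) \<longlonglongrightarrow> 0" by simp
  have "\<forall>\<^sub>F n in sequentially. ?f' k - e n \<le> bconvs (poisson l) p n k"
    using pad order_tendstoD(2)[OF e half_gt_zero[OF \<eta>]]
      order_tendstoD(2)[OF t half_gt_zero[OF \<eta>]]
  proof eventually_elim
    case (elim n)
    then have ub: "unit_valued (pad_seq p' (l' - l) n)" and close: "\<And>j. \<bar>?h n j - ?f' j\<bar> \<le> e n"
      by auto
    have "\<bar>bconvs (poisson l) p n j - ?f j\<bar> < \<eta> / 2" for j
      using pbf_bconvs_dist_le[OF v, of j n] elim by linarith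
    then have "int (lead_mode (bconvs (poisson l) p n)) \<notin> {j. j < int (low_mode ?f)}"
      using gap
        by (intro lead_mode_notin_of_close[OF ulc_seq_bconvs[OF ulc_seq_poisson[OF l0] u]]) auto
    then have "?h n k \<le> bconvs (poisson l) (trunc_seq p n) (2 * n) k"
      using k ll
        by (intro bconvs_antimono_below_mode[OF ulc_seq_poisson[OF l0] unit_valued_trunc_seq[OF u] ub]
          trunc_seq_le_pad_seq[OF pp]) (auto simp: bconvs_trunc_seq)
    then show ?case using close[of k] unfolding bconvs_trunc_seq by linarith
  qed
  moreover have "(\<lambda>n. ?f' k - e n) \<longlonglongrightarrow> ?f' k"
    using tendsto_diff[OF tendsto_const e] by simp
  ultimately show ?thesis
    by (intro tendsto_le[OF trivial_limit_sequentially bconvs_tendsto_pbf[OF v]])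
qed

section \<open>Tightness and sequential compactness\<close>

lemma bconvs_poisson_pgf_le:
  assumes l: "0 \<le> l" and u: "unit_valued p" and z: "0 \<le> z" "z \<le> 1"
  shows "z ^ j * bconvs (poisson l) p n (int j) \<le> exp (- ((1 - z) * (l + (\<Sum>i<n. p i))))"
proof (induction n arbitrary: j)
  case 0
  then show ?case using poisson_pgf_term_le[OF l z] by simp
next
  case (Suc n)
  define \<Phi> where "\<Phi> = exp (- ((1 - z) * (l + (\<Sum>i<n. p i))))"
  let ?g = "bconvs (poisson l) p n"
  have t: "0 \<le> p n" "p n \<le> 1" using u by (auto simp: unit_valued_def)
  have IH: "z ^ j * ?g (int j) \<le> \<Phi>" for j using Suc by (simp add: \<Phi>_def)
  have shifted: "z ^ j * ?g (int j - 1) \<le> z * \<Phi>"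
  proof (cases j)
    case 0
    then show ?thesis using supp_nat_bconvs[OF supp_nat_poisson, of l p n] z
      by (simp add: supp_nat_def \<Phi>_def)
  next
    case (Suc m)
    then show ?thesis using IH[of m] z by (simp add: mult.assoc mult_left_mono)
  qed
  have "z ^ j * bconvs (poisson l) p (Suc n) (int j) = (1 - p n) * (z ^ j * ?g (int j)) + p n * (z ^ j * ?g (int j - 1))"
    by (simp add: bconv_def algebra_simps)
  also have "\<dots> \<le> (1 - p n) * \<Phi> + p n * (z * \<Phi>)"
    using IH[of j] shifted t by (intro add_mono mult_left_mono) auto
  also have "\<dots> = (1 - p n * (1 - z)) * \<Phi>" by (simp add: algebra_simps)
  also have "\<dots> \<le> exp (- (p n * (1 - z))) * \<Phi>"
    using one_minus_le_exp_minus[of "p n * (1 - z)"]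
      by (intro mult_right_mono) (auto simp: \<Phi>_def)
  also have "\<dots> = exp (- ((1 - z) * (l + (\<Sum>i<Suc n. p i))))"
    by (simp add: \<Phi>_def exp_add[symmetric] algebra_simps)
  finally show ?case .
qed

lemma pbf_pgf_le:
  assumes v: "pb_param l p" and z: "0 \<le> z" "z \<le> 1"
  shows "z ^ j * pbf (int j) (l, p) \<le> exp (- ((1 - z) * (l + (\<Sum>i<n. p i))))"
proof -
  have l0: "0 \<le> l" and u: "unit_valued p" using v by (auto simp: pb_param_def)
  have "z ^ j * bconvs (poisson l) p m (int j) \<le> exp (- ((1 - z) * (l + (\<Sum>i<n. p i))))" if "m \<ge> n" for m
  proof -
    have "(\<Sum>i<n. p i) \<le> (\<Sum>i<m. p i)" using that u
      by (intro sum_mono2) (auto simp: unit_valued_def)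
    then have "exp (- ((1 - z) * (l + (\<Sum>i<m. p i)))) \<le> exp (- ((1 - z) * (l + (\<Sum>i<n. p i))))"
      using z by (auto intro!: mult_left_mono)
    then show ?thesis using bconvs_poisson_pgf_le[OF l0 u z, of j m] by linarith
  qed
  moreover have "(\<lambda>m. z ^ j * bconvs (poisson l) p m (int j)) \<longlonglongrightarrow> z ^ j * pbf (int j) (l, p)"
    by (intro tendsto_intros bconvs_tendsto_pbf v)
  ultimately show ?thesis by (intro LIMSEQ_le_const2) auto
qed

text \<open>The generating-function bound at z = 1/2.\<close>
lemma pbf_lower_bound_mass_le:
  assumes v: "pb_param l p" and c: "0 < c" "c \<le> pbf (int k) (l, p)"
  shows "l + (\<Sum>i<n. p i) \<le> - 2 * ln (c / 2 ^ k)"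
proof -
  have "(1/2) ^ k * c \<le> (1/2) ^ k * pbf (int k) (l, p)" using c by (intro mult_left_mono) auto
  also have "\<dots> \<le> exp (- ((1 - 1/2) * (l + (\<Sum>i<n. p i))))"
    by (rule pbf_pgf_le[OF v]) auto
  finally have "c / 2 ^ k \<le> exp (- ((l + (\<Sum>i<n. p i)) / 2))" by (simp add: power_divide)
  then have "ln (c / 2 ^ k) \<le> ln (exp (- ((l + (\<Sum>i<n. p i)) / 2)))"
    using c by (subst ln_le_cancel_iff) auto
  then have "ln (c / 2 ^ k) \<le> - ((l + (\<Sum>i<n. p i)) / 2)" by simp
  then show ?thesis by (simp add: field_simps)
qed

lemma tendsto_bconvs:
  assumes "\<And>k. (\<lambda>m. g m k) \<longlonglongrightarrow> g0 k" "\<And>i. i < N \<Longrightarrow> (\<lambda>m. p m i) \<longlonglongrightarrow> p0 i"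
  shows "(\<lambda>m. bconvs (g m) (p m) N k) \<longlonglongrightarrow> bconvs g0 p0 N k"
  using assms(2)
proof (induction N arbitrary: k)
  case 0 then show ?case using assms(1) by simp
next
  case (Suc N)
  have IH: "\<And>k. (\<lambda>m. bconvs (g m) (p m) N k) \<longlonglongrightarrow> bconvs g0 p0 N k" using Suc by simp
  have pN: "(\<lambda>m. p m N) \<longlonglongrightarrow> p0 N" using Suc by simp
  show ?case unfolding bconvs.simps bconv_def
    by (intro tendsto_intros IH pN)
qed

lemma sum_lessThan_add_shift:
  fixes p :: "nat \<Rightarrow> 'a::comm_monoid_add"
  shows "(\<Sum>i<N + m. p i) = (\<Sum>i<N. p i) + (\<Sum>i<m. p (N + i))"
  by (induction m) (auto simp: add.assoc)

lemma decseq_term_le_mean: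
  fixes p :: "nat \<Rightarrow> real"
  assumes "decseq p" "\<And>M. (\<Sum>i<M. p i) \<le> C"
  shows "p N \<le> C / real (Suc N)"
proof -
  have "real (Suc N) * p N = (\<Sum>i<Suc N. p N)" by simp
  also have "\<dots> \<le> (\<Sum>i<Suc N. p i)" by (intro sum_mono decseqD[OF assms(1)]) auto
  also have "\<dots> \<le> C" by (rule assms(2))
  finally show ?thesis by (simp add: field_simps)
qed

lemma bconvs_head_tail_dist_le:
  assumes l0: "0 \<le> l" and u: "unit_valued p" and dec: "decseq p" and C: "\<And>M. l + (\<Sum>i<M. p i) \<le> C"
  shows "\<bar>bconvs (poisson l) p (N + m) (int j) - bconvs (poisson (l + (\<Sum>i<m. p (N + i)))) p N (int j)\<bar>
    \<le> 2 * C\<^sup>2 / real (Suc N)"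
proof -
  define sh where "sh i = p (N + i)" for i
  have pnn: "\<And>i. 0 \<le> p i" and ush: "unit_valued sh" using u
    by (auto simp: unit_valued_def sh_def)
  have sumC: "(\<Sum>i<M. p i) \<le> C" for M using C[of M] l0 by linarith
  have C0: "0 \<le> C" using C[of 0] l0 by simp
  have shC: "(\<Sum>i<m. sh i) \<le> C"
    using sumC[of "N + m"] sum_nonneg[of "{..<N}" p] pnn unfolding sum_lessThan_add_shift sh_def
      by fastforce
  have "bconvs (poisson l) p (N + m) = bconvs (bconvs (poisson l) sh m) p N"
    unfolding sh_def bconvs_add by (rule bconvs_commute)
  then have "\<bar>bconvs (poisson l) p (N + m) (int j) - bconvs (poisson (l + (\<Sum>i<m. sh i))) p N (int j)\<bar>
      \<le> 2 * (\<Sum>i<m. (sh i)\<^sup>2)"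
    using bconvs_le_cam[OF l0 ush u, of m N j] by simp
  also have "(\<Sum>i<m. (sh i)\<^sup>2) \<le> p N * (\<Sum>i<m. sh i)"
    unfolding sum_distrib_left power2_eq_square sh_def
    using decseqD[OF dec] pnn by (intro sum_mono mult_right_mono) auto
  also have "\<dots> \<le> C / real (Suc N) * C"
    using decseq_term_le_mean[OF dec sumC] shC C0 pnn
      by (intro mult_mono) (auto simp: sh_def intro: sum_nonneg)
  finally show ?thesis by (simp add: sh_def power2_eq_square)
qed

lemma pbf_head_tail_dist_le:
  assumes v: "pb_param l p" and dec: "decseq p" and C: "\<And>M. l + (\<Sum>i<M. p i) \<le> C"
  shows "\<bar>pbf (int j) (l, p) - bconvs (poisson (l + tail p N)) p N (int j)\<bar> \<le> 2 * C\<^sup>2 / real (Suc N)"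
proof -
  have l0: "0 \<le> l" and u: "unit_valued p" and s: "summable p" using v
    by (auto simp: pb_param_def)
  have "(\<lambda>m. bconvs (poisson l) p (N + m) (int j)) \<longlonglongrightarrow> pbf (int j) (l, p)"
    using LIMSEQ_ignore_initial_segment[OF bconvs_tendsto_pbf[OF v, of "int j"], of N]
    by (simp add: add.commute)
  moreover have "(\<lambda>m. bconvs (poisson (l + (\<Sum>i<m. p (N + i)))) p N (int j))
      \<longlonglongrightarrow> bconvs (poisson (l + tail p N)) p N (int j)"
  proof -
    have "summable (\<lambda>i. p (N + i))" using s by (simp add: add.commute[of N])
    moreover have "(\<Sum>i. p (N + i)) = tail p N"
      unfolding tail_def using suminf_minus_initial_segment[OF s, of N] by (simp add: add.commute)
    ultimately have "(\<lambda>m. \<Sum>i<m. p (N + i)) \<longlonglongrightarrow> tail p N"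
      using summable_LIMSEQ by fastforce
    then show ?thesis
      by (intro tendsto_bconvs[where p = "\<lambda>_. p", simplified]) (auto intro!: tendsto_poisson tendsto_intros)
  qed
  ultimately have "(\<lambda>m. \<bar>bconvs (poisson l) p (N + m) (int j) - bconvs (poisson (l + (\<Sum>i<m. p (N + i)))) p N (int j)\<bar>)
      \<longlonglongrightarrow> \<bar>pbf (int j) (l, p) - bconvs (poisson (l + tail p N)) p N (int j)\<bar>"
    by (intro tendsto_intros)
  then show ?thesis using bconvs_head_tail_dist_le[OF l0 u dec C] by (intro LIMSEQ_le_const2) auto
qed

lemma bounded_coordinatewise_convergent_subseq:
  fixes x :: "nat \<Rightarrow> nat \<Rightarrow> real" assumes bd: "\<And>n i. \<bar>x n i\<bar> \<le> B"
  shows "\<exists>r. strict_mono r \<and> (\<forall>i. convergent (\<lambda>n. x (r n) i))"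
proof -
  let ?P = "\<lambda>i s. convergent (\<lambda>n. x (s n) i)"
  interpret nat: subseqs ?P
  proof (unfold subseqs_def, intro allI impI)
    fix i :: nat and s :: "nat \<Rightarrow> nat" assume s: "strict_mono s"
    obtain f where f: "strict_mono f" "monoseq (\<lambda>n. x (s (f n)) i)"
      using seq_monosub[of "\<lambda>n. x (s n) i"] by blast
    have "Bseq (\<lambda>n. x (s (f n)) i)" by (rule BseqI'[of _ B]) (use bd in auto)
    then have "convergent (\<lambda>n. x (s (f n)) i)" using f(2) by (rule Bseq_monoseq_convergent)
    then show "\<exists>r'. strict_mono r' \<and> convergent (\<lambda>n. x ((s \<circ> r') n) i)"
      using f(1) by auto
  qed
  define d where "d = nat.diagseq"
  have subseq: "strict_mono d" unfolding d_def using nat.subseq_diagseq by auto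
  have "?P i d" for i
  proof -
    have Pn_seqseq: "?P i (nat.seqseq (Suc i))" by (rule nat.seqseq_holds)
    have 1: "(\<lambda>k. x ((nat.seqseq (Suc i) \<circ> (\<lambda>k. nat.fold_reduce (Suc i) k (Suc i + k))) k) i) =
      (\<lambda>k. x (nat.seqseq (Suc i) k) i) \<circ> (\<lambda>k. nat.fold_reduce (Suc i) k (Suc i + k))"
      by auto
    have 2: "?P i (d \<circ> ((+) (Suc i)))"
      unfolding d_def nat.diagseq_seqseq 1
      by (intro convergent_subseq_convergent Pn_seqseq nat.subseq_diagonal_rest)
    then obtain L where 3: "(\<lambda>na. x (d (na + Suc i)) i) \<longlonglongrightarrow> L"
      by (auto simp: add.commute dest: convergentD)
    then have "(\<lambda>k. x (d k) i) \<longlonglongrightarrow> L" by (rule LIMSEQ_offset)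
    then show ?thesis by (auto simp: convergent_def)
  qed
  then show ?thesis using subseq by blast
qed

lemma nabla_total_mass_bounds:
  assumes q: "(l, p) \<in> nabla" and C: "\<And>M. l + (\<Sum>i<M. p i) \<le> C"
  shows "0 \<le> l + suminf p" and "l + suminf p \<le> C"
proof -
  have l0: "0 \<le> l" and s: "summable p" and pnn: "\<And>i. 0 \<le> p i" using q
    by (auto simp: nabla_def)
  show "0 \<le> l + suminf p" using l0 suminf_nonneg[OF s pnn] by simp
  have "suminf p \<le> C - l" using C by (intro suminf_le_const[OF s]) (simp add: algebra_simps)
  then show "l + suminf p \<le> C" by simp
qed

lemma nabla_coordinatewise_limit:
  assumes sn: "\<And>n. (l n, p n) \<in> nabla" and C: "\<And>n M. l n + (\<Sum>i<M. p n i) \<le> C"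
    and T: "(\<lambda>n. l n + suminf (p n)) \<longlonglongrightarrow> T" and coord: "\<And>i. (\<lambda>n. p n i) \<longlonglongrightarrow> pl i"
  shows "(T - suminf pl, pl) \<in> nabla" and "\<And>M. T - suminf pl + (\<Sum>i<M. pl i) \<le> C"
proof -
  have l0: "0 \<le> l n" and s: "summable (p n)" and pnn: "0 \<le> p n i" and dec: "p n (Suc i) \<le> p n i"
    and p1: "p n i \<le> 1" for n i
    using nabla_pb_param[OF sn[of n]] sn[of n]
      by (auto simp: nabla_def pb_param_def unit_valued_def)
  have pl01: "0 \<le> pl i" "pl i \<le> 1" for i
    using coord[of i] pnn p1 by (auto intro: LIMSEQ_le_const LIMSEQ_le_const2)
  have pldec: "pl (Suc i) \<le> pl i" for i
    using coord[of i] coord[of "Suc i"] dec by (intro LIMSEQ_le) auto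
  have plsum: "(\<Sum>i<M. pl i) \<le> T" for M
  proof (rule LIMSEQ_le[OF tendsto_sum[OF coord] T])
    show "\<exists>N. \<forall>n\<ge>N. (\<Sum>i<M. p n i) \<le> l n + suminf (p n)"
      using l0 sum_le_suminf[OF s, of "{..<M}"] pnn by (auto intro: add_increasing)
  qed
  have pls: "summable pl" by (rule summableI_nonneg_bounded[of _ T]) (use pl01 plsum in auto)
  have "suminf pl \<le> T" by (rule suminf_le_const[OF pls plsum])
  then show "(T - suminf pl, pl) \<in> nabla" unfolding nabla_def using pl01 pldec pls by auto
  have "T \<le> C" using T nabla_total_mass_bounds(2)[OF sn C] by (intro LIMSEQ_le_const2) auto
  then show "T - suminf pl + (\<Sum>i<M. pl i) \<le> C" for M
    using sum_le_suminf[OF pls, of "{..<M}"] pl01 by auto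
qed

lemma pbf_nat_tendsto_of_params:
  assumes sn: "\<And>n. (l n, p n) \<in> nabla" and q: "(lam, pl) \<in> nabla"
    and C: "\<And>n M. l n + (\<Sum>i<M. p n i) \<le> C" and Cq: "\<And>M. lam + (\<Sum>i<M. pl i) \<le> C"
    and mass: "(\<lambda>n. l n + suminf (p n)) \<longlonglongrightarrow> lam + suminf pl"
    and coord: "\<And>i. (\<lambda>n. p n i) \<longlonglongrightarrow> pl i"
  shows "(\<lambda>n. pbf (int j) (l n, p n)) \<longlonglongrightarrow> pbf (int j) (lam, pl)"
proof (rule LIMSEQ_I)
  fix \<epsilon> :: real assume \<epsilon>: "0 < \<epsilon>"
  have v: "pb_param (l n) (p n)" and dec: "decseq (p n)" for n
    using nabla_pb_param[OF sn[of n]] sn[of n] by (auto simp: nabla_def intro: decseq_SucI)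
  have vq: "pb_param lam pl" and decq: "decseq pl"
    using nabla_pb_param[OF q] q by (auto simp: nabla_def intro: decseq_SucI)
  define N where "N = nat \<lceil>8 * C\<^sup>2 / \<epsilon>\<rceil>"
  define err where "err = 2 * C\<^sup>2 / real (Suc N)"
  have "8 * C\<^sup>2 / \<epsilon> < real (Suc N)" unfolding N_def by linarith
  then have "8 * C\<^sup>2 < real (Suc N) * \<epsilon>" using \<epsilon>
    by (simp add: divide_less_eq)
  then have err: "err < \<epsilon> / 4" unfolding err_def by (simp add: divide_less_eq mult.commute)
  define G where "G n = bconvs (poisson (l n + tail (p n) N)) (p n) N (int j)" for n
  define G0 where "G0 = bconvs (poisson (lam + tail pl N)) pl N (int j)"
  have "(\<lambda>n. (l n + suminf (p n)) - (\<Sum>i<N. p n i)) \<longlonglongrightarrow> (lam + suminf pl) - (\<Sum>i<N. pl i)"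
    by (intro tendsto_intros mass coord)
  then have "(\<lambda>n. l n + tail (p n) N) \<longlonglongrightarrow> lam + tail pl N"
    by (simp add: tail_def algebra_simps)
  then have "G \<longlonglongrightarrow> G0" unfolding G_def[abs_def] G0_def
    by (intro tendsto_bconvs) (auto intro!: tendsto_poisson coord)
  then obtain M where M: "\<And>n. n \<ge> M \<Longrightarrow> norm (G n - G0) < \<epsilon> / 4"
    using LIMSEQ_D \<epsilon> by (metis divide_pos_pos zero_less_numeral)
  have "\<bar>pbf (int j) (l n, p n) - pbf (int j) (lam, pl)\<bar> < \<epsilon>" if "n \<ge> M" for n
  proof -
    have "\<bar>pbf (int j) (l n, p n) - G n\<bar> \<le> err"
      unfolding G_def err_def by (rule pbf_head_tail_dist_le[OF v dec C])
    moreover have "\<bar>pbf (int j) (lam, pl) - G0\<bar> \<le> err"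
      unfolding G0_def err_def by (rule pbf_head_tail_dist_le[OF vq decq Cq])
    moreover have "\<bar>G n - G0\<bar> < \<epsilon> / 4" using M[OF that] by simp
    ultimately show ?thesis using err by linarith
  qed
  then show "\<exists>no. \<forall>n\<ge>no. norm (pbf (int j) (l n, p n) - pbf (int j) (lam, pl)) < \<epsilon>" by auto
qed

lemma pbf_tendsto_of_params:
  assumes sn: "\<And>n. (l n, p n) \<in> nabla" and q: "(lam, pl) \<in> nabla"
    and C: "\<And>n M. l n + (\<Sum>i<M. p n i) \<le> C" and Cq: "\<And>M. lam + (\<Sum>i<M. pl i) \<le> C"
    and mass: "(\<lambda>n. l n + suminf (p n)) \<longlonglongrightarrow> lam + suminf pl"
    and coord: "\<And>i. (\<lambda>n. p n i) \<longlonglongrightarrow> pl i"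
  shows "(\<lambda>n. pbf k (l n, p n)) \<longlonglongrightarrow> pbf k (lam, pl)"
proof (cases "k < 0")
  case True
  have "pb_param (l n) (p n)" "pb_param lam pl" for n
    using nabla_pb_param[OF sn[of n]] nabla_pb_param[OF q] by simp_all
  then show ?thesis using pbf_neg True by simp
next
  case False
  then obtain j where "k = int j" by (metis nonneg_int_cases not_less)
  then show ?thesis using pbf_nat_tendsto_of_params[OF assms] by simp
qed

lemma nabla_bounded_mass_convergent_subseq:
  fixes s :: "nat \<Rightarrow> pbpar"
  assumes sn: "\<And>n. s n \<in> nabla" and C: "\<And>n M. fst (s n) + (\<Sum>i<M. snd (s n) i) \<le> C"
  shows "\<exists>r q. strict_mono r \<and> q \<in> nabla \<and> (\<forall>k. (\<lambda>n. pbf k (s (r n))) \<longlonglongrightarrow> pbf k q)"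
proof -
  define l where "l n = fst (s n)" for n
  define p where "p n = snd (s n)" for n
  have sn': "(l n, p n) \<in> nabla" for n using sn by (simp add: l_def p_def)
  have Cn: "l n + (\<Sum>i<M. p n i) \<le> C" for n M using C by (simp add: l_def p_def)
  \<comment> \<open>Coordinate 0 records the total mass, coordinate i + 1 the parameter p i.\<close>
  define x where "x n i = (case i of 0 \<Rightarrow> l n + suminf (p n) | Suc i' \<Rightarrow> p n i')" for n i
  have "\<bar>x n i\<bar> \<le> C + 1" for n i
  proof (cases i)
    case 0
    then show ?thesis using nabla_total_mass_bounds[OF sn' Cn, of n] by (simp add: x_def)
  next
    case (Suc i')
    have "0 \<le> p n i'" "p n i' \<le> 1"
      using nabla_pb_param[OF sn'[of n]] by (auto simp: pb_param_def unit_valued_def)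
    then show ?thesis
      using Suc nabla_total_mass_bounds(1)[OF sn' Cn, of n] nabla_total_mass_bounds(2)[OF sn' Cn, of n]
      by (simp add: x_def)
  qed
  then obtain r where r: "strict_mono r" "\<And>i. convergent (\<lambda>n. x (r n) i)"
    using bounded_coordinatewise_convergent_subseq[of x "C + 1"] by blast
  define T where "T = lim (\<lambda>n. x (r n) 0)"
  define pl where "pl i = lim (\<lambda>n. p (r n) i)" for i
  have T: "(\<lambda>n. l (r n) + suminf (p (r n))) \<longlonglongrightarrow> T"
    using r(2)[of 0] unfolding T_def x_def by (simp add: convergent_LIMSEQ_iff)
  have coord: "(\<lambda>n. p (r n) i) \<longlonglongrightarrow> pl i" for i
    using r(2)[of "Suc i"] unfolding pl_def x_def by (simp add: convergent_LIMSEQ_iff)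
  note lim = nabla_coordinatewise_limit[of "\<lambda>n. l (r n)" "\<lambda>n. p (r n)", OF sn' Cn T coord]
  have "(\<lambda>n. pbf k (l (r n), p (r n))) \<longlonglongrightarrow> pbf k (T - suminf pl, pl)" for k
    by (rule pbf_tendsto_of_params[OF sn' lim(1) Cn lim(2)]) (use T coord in auto)
  then show ?thesis using r(1) lim(1) by (auto simp: l_def p_def)
qed

section \<open>Directed families\<close>

lemma pbf_mono_above_m_plus:
  assumes "q \<in> nabla" "q' \<in> nabla" "pb_le q q'" "ulc_seq (\<lambda>k. pbf k q')" "int (m_plus q') < k"
  shows "pbf k q \<le> pbf k q'"
  using pbf_mono_above_mode[OF nabla_pb_param[OF assms(1)] nabla_pb_param[OF assms(2)], of k] assms(3-5)
    m_plus_eq_lead_mode[OF assms(4)]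
  by (simp add: pb_le_def)

lemma pbf_antimono_below_m_minus:
  assumes "q \<in> nabla" "q' \<in> nabla" "pb_le q q'" "ulc_seq (\<lambda>k. pbf k q)" "k < int (m_minus q)"
  shows "pbf k q' \<le> pbf k q"
  using pbf_antimono_below_mode[OF nabla_pb_param[OF assms(1)] nabla_pb_param[OF assms(2)], of k] assms(3-5)
    m_minus_eq_low_mode[OF assms(4)]
  by (simp add: pb_le_def)

lemma ulc_seq_pbf_nabla:
  assumes "q \<in> nabla" "pbf k q \<noteq> 0"
  shows "ulc_seq (\<lambda>k. pbf k q)"
  using ulc_seq_pbf[OF nabla_pb_param[OF assms(1)], of k] assms(2) by simp

lemma pbf_nonneg_nabla:
  assumes "q \<in> nabla"
  shows "0 \<le> pbf k q"
  using pbf_nonneg[OF nabla_pb_param[OF assms]] by simp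

lemma pbf_le1_nabla:
  assumes "q \<in> nabla"
  shows "pbf k q \<le> 1"
  using pbf_le1[OF nabla_pb_param[OF assms]] by simp

lemma pbf_zero_param: "pbf k (0, \<lambda>_. 0) = (if k = 0 then 1 else 0)"
proof -
  have "bconvs (poisson 0) (\<lambda>_. 0) n = poisson 0" for n by (induction n) auto
  moreover have "poisson 0 k = (if k = 0 then 1 else 0)" by (simp add: poisson_def)
  ultimately show ?thesis by (simp add: pbf_def pb_partial_eq_bconvs)
qed

lemma zero_param_nabla: "(0, \<lambda>_. 0) \<in> nabla" by (simp add: nabla_def)

lemma ulc_seq_zero_param: "ulc_seq (\<lambda>k. pbf k (0, \<lambda>_. 0))"
  by (rule ulc_seq_pbf_nabla[OF zero_param_nabla, of 0]) (simp add: pbf_zero_param)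

lemma m_plus_zero_param: "m_plus (0, \<lambda>_. 0) = 0"
proof -
  have "is_lead_mode (\<lambda>k. pbf k (0, \<lambda>_. 0)) 0"
    by (simp add: is_lead_mode_def pbf_zero_param)
  then show ?thesis
    using m_plus_eq_lead_mode[OF ulc_seq_zero_param] lead_mode_eqI[OF ulc_seq_zero_param] by simp
qed

lemma directed_reaches_mode:
  assumes PN: "P \<subseteq> nabla" and dir: "directed P"
  shows "\<exists>q\<in>P. m_plus q = j \<and> 0 < pbf (int j) q"
proof (induction j)
  case 0
  have "(0, \<lambda>_. 0) \<in> P" using dir by (simp add: directed_def)
  then show ?case using m_plus_zero_param
    by (intro bexI[of _ "(0, \<lambda>_. 0)"]) (auto simp: pbf_zero_param)
next
  case (Suc j)
  then obtain q where q: "q \<in> P" "m_plus q = j" by blast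
  obtain q' where q': "q' \<in> P" "m_plus q' = j + 1" "pbf (int j + 1) q < pbf (int j + 1) q'"
    using dir q unfolding directed_def by blast
  have "0 \<le> pbf (int j + 1) q" using PN q(1) pbf_nonneg_nabla by blast
  then have "0 < pbf (int (Suc j)) q'" using q'(3) by (simp add: add.commute)
  then show ?case using q'(1,2) by auto
qed

lemma directed_improves_above_m_plus:
  assumes PN: "P \<subseteq> nabla" and dir: "directed P" and q: "q \<in> P" "m_plus q < k"
  shows "\<exists>q''\<in>P. pbf (int k) q < pbf (int k) q''"
  using q
proof (induction "k - m_plus q" arbitrary: q rule: less_induct)
  case less
  obtain q' where q': "q' \<in> P" "pb_le q q'" "m_plus q' = m_plus q + 1"
    "pbf (int (m_plus q) + 1) q < pbf (int (m_plus q) + 1) q'"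
    using dir less.prems(1) unfolding directed_def by blast
  show ?case
  proof (cases "m_plus q' = k")
    case True
    then have "int (m_plus q) + 1 = int k" using q'(3) by simp
    then have "pbf (int k) q < pbf (int k) q'" using q'(4) by simp
    then show ?thesis using q'(1) by blast
  next
    case False
    then have above: "m_plus q' < k" using less.prems(2) q'(3) by simp
    have qn: "q \<in> nabla" "q' \<in> nabla" using PN less.prems(1) q'(1) by auto
    have "pbf (int (m_plus q) + 1) q' \<noteq> 0"
      using q'(4) pbf_nonneg_nabla[OF qn(1), of "int (m_plus q) + 1"] by simp
    then have "pbf (int k) q \<le> pbf (int k) q'"
      using above by (intro pbf_mono_above_m_plus[OF qn q'(2) ulc_seq_pbf_nabla[OF qn(2)]]) auto
    moreover have "\<exists>q''\<in>P. pbf (int k) q' < pbf (int k) q''"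
      by (rule less.hyps[OF _ q'(1) above]) (use q'(3) above in simp)
    ultimately show ?thesis by force
  qed
qed

lemma directed_improves_below_m_minus:
  assumes PN: "P \<subseteq> nabla" and dir: "directed P" and q: "q \<in> P" "k < m_minus q"
  shows "\<exists>q''\<in>P. pbf (int k) q < pbf (int k) q''"
  using q
proof (induction "m_minus q - k" arbitrary: q rule: less_induct)
  case less
  define k' where "k' = m_minus q - 1"
  have mq: "m_minus q = k' + 1" using less.prems(2) by (simp add: k'_def)
  obtain q' where q': "q' \<in> P" "pb_le q' q" "m_minus q' = k'" "pbf (int k') q < pbf (int k') q'"
    using dir less.prems(1) mq unfolding directed_def by blast
  show ?case
  proof (cases "k' = k")
    case True
    then show ?thesis using q'(1,4) by blast
  next
    case False
    then have below: "k < m_minus q'" using less.prems(2) mq q'(3) by simp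
    have qn: "q' \<in> nabla" "q \<in> nabla" using PN less.prems(1) q'(1) by auto
    have "pbf (int k') q' \<noteq> 0" using q'(4) pbf_nonneg_nabla[OF qn(2), of "int k'"] by simp
    then have "pbf (int k) q \<le> pbf (int k) q'"
      using below
        by (intro pbf_antimono_below_m_minus[OF qn q'(2) ulc_seq_pbf_nabla[OF qn(1)]]) auto
    moreover have "\<exists>q''\<in>P. pbf (int k) q' < pbf (int k) q''"
      by (rule less.hyps[OF _ q'(1) below]) (use q'(3) mq below in simp)
    ultimately show ?thesis by force
  qed
qed

lemma directed_maximiser_is_mode:
  assumes PN: "P \<subseteq> nabla" and dir: "directed P" and q: "q \<in> P"
    and max: "\<forall>q'\<in>P. pbf (int k) q' \<le> pbf (int k) q"
  shows "is_mode k q"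
proof -
  obtain q0 where "q0 \<in> P" "0 < pbf (int k) q0" using directed_reaches_mode[OF PN dir] by blast
  then have "pbf (int k) q \<noteq> 0" using max by force
  then have "ulc_seq (\<lambda>j. pbf j q)" using PN q by (intro ulc_seq_pbf_nabla) auto
  moreover have "\<not> m_plus q < k" using directed_improves_above_m_plus[OF PN dir q] max by force
  moreover have "\<not> k < m_minus q" using directed_improves_below_m_minus[OF PN dir q] max
    by force
  ultimately show ?thesis by (simp add: is_mode_iff)
qed

lemma nabla_closed_attains_max:
  assumes PN: "P \<subseteq> nabla" and cl: "nabla_closed P" and q0: "q0 \<in> P" "0 < pbf (int k) q0"
  shows "\<exists>q\<in>P. \<forall>q'\<in>P. pbf (int k) q' \<le> pbf (int k) q"
proof -
  define f where "f q = pbf (int k) q" for q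
  have bdd: "bdd_above (f ` P)" using PN pbf_le1_nabla
    by (intro bdd_aboveI[of _ 1]) (auto simp: f_def)
  define M where "M = (SUP q\<in>P. f q)"
  have le: "f q \<le> M" if "q \<in> P" for q unfolding M_def by (rule cSUP_upper[OF that bdd])
  have M0: "0 < M" using le[OF q0(1)] q0(2) by (simp add: f_def)
  have "\<exists>q\<in>P. M - M / real (n + 2) < f q" for n
  proof -
    have "M - M / real (n + 2) < M" using M0 by simp
    moreover have "P \<noteq> {}" using q0(1) by blast
    ultimately show ?thesis unfolding M_def using less_cSUP_iff[OF _ bdd] by blast
  qed
  then obtain s where sP: "\<And>n. s n \<in> P" and s: "\<And>n. M - M / real (n + 2) < f (s n)"
    by metis
  have sN: "s n \<in> nabla" for n using sP PN by blast
  have half: "M / 2 \<le> f (s n)" for n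
  proof -
    have "M / real (n + 2) \<le> M / 2" using M0 by (intro divide_left_mono) auto
    then show ?thesis using s[of n] by linarith
  qed
  have mass: "fst (s n) + (\<Sum>i<m. snd (s n) i) \<le> - 2 * ln (M / 2 / 2 ^ k)" for n m
  proof -
    have "M / 2 \<le> pbf (int k) (fst (s n), snd (s n))" using half[of n] by (simp add: f_def)
    then show ?thesis using M0 by (intro pbf_lower_bound_mass_le[OF nabla_pb_param[OF sN]]) auto
  qed
  obtain r q where r: "strict_mono r" "q \<in> nabla" "\<forall>j. (\<lambda>n. pbf j (s (r n))) \<longlonglongrightarrow> pbf j q"
    using nabla_bounded_mass_convergent_subseq[of s, OF sN mass] by blast
  have "q \<in> P"
    using cl[unfolded nabla_closed_def, rule_format, of "\<lambda>n. s (r n)" q] sP r(2,3) by blast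
  moreover have "M \<le> f q"
  proof (rule tendsto_le[OF trivial_limit_sequentially])
    show "(\<lambda>n. f (s (r n))) \<longlonglongrightarrow> f q" using r(3) by (simp add: f_def)
    have "(\<lambda>n. M / real (n + 2)) \<longlonglongrightarrow> 0"
      using LIMSEQ_ignore_initial_segment[OF lim_const_over_n[of M], of 2] by simp
    then have "(\<lambda>n. M - M / real (n + 2)) \<longlonglongrightarrow> M"
      using tendsto_diff[OF tendsto_const, of _ 0 sequentially M] by simp
    then show "(\<lambda>n. M - M / real (r n + 2)) \<longlonglongrightarrow> M"
      using LIMSEQ_subseq_LIMSEQ[OF _ r(1)] by (simp add: o_def)
    show "\<forall>\<^sub>F n in sequentially. M - M / real (r n + 2) \<le> f (s (r n))" using s
      by (simp add: less_imp_le)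
  qed
  ultimately show ?thesis using le unfolding f_def by force
qed

theorem theorem3:
  fixes P :: "pbpar set"
  assumes "P \<subseteq> nabla" and "nabla_closed P" and "directed P"
  shows "cross_modal P"
  unfolding cross_modal_def
proof (intro allI conjI ballI impI)
  fix k :: nat
  obtain q0 where "q0 \<in> P" "0 < pbf (int k) q0" using directed_reaches_mode[OF assms(1,3)]
    by blast
  then show "\<exists>q\<in>P. \<forall>q'\<in>P. pbf (int k) q' \<le> pbf (int k) q"
    by (rule nabla_closed_attains_max[OF assms(1,2)])
next
  fix k :: nat and q assume "q \<in> P" "\<forall>q'\<in>P. pbf (int k) q' \<le> pbf (int k) q"
  then show "is_mode k q" by (rule directed_maximiser_is_mode[OF assms(1,3)])
qed

end
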